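(* Assume Setting (S) and, in addition, that $|C_n|\le M|d_nD_n|$ for all $n\in\mathbb{N}$. Then for every $\varepsilon\in(0,1)$ and every $T>\frac{2\pi}{\gamma\sqrt{1-\varepsilon}}$ there exist $n_0=n_0(\varepsilon)\in\mathbb{N}$, independent of $T$ and of the coefficients $C_n,D_n,R_n$, and a constant $c(T,\varepsilon)>0$ such that $$\int_0^\infty k(t)\big(|u_1^{n_0}(t)|^2+|u_2^{n_0}(t)|^2\big)dt\ \ge\ c(T,\varepsilon)\sum_{n=n_0}^\infty\big(|C_n|^2+|d_nD_n|^2\big).$$
   Context: Setting (S): $(\omega_n),(\zeta_n),(C_n),(D_n),(c_n),(d_n)$ ($n\ge1$) are complex sequences and $(r_n),(R_n)$ are real sequences. There are constants $\gamma>0$, $\alpha>0$, $\chi<0$, $n'\in\mathbb{N}$, $\mu>0$, $\nu>1/2$, $M>0$, $0<c_1\le c_2$ such that: (H1) $\liminf_{n\to\infty}(\operatorname{Re}\omega_{n+1}-\operatorname{Re}\omega_n)=\liminf_{n\to\infty}(\operatorname{Re}\zeta_{n+1}-\operatorname{Re}\zeta_n)=\gamma$; (H2) $\operatorname{Im}\omega_n\to\alpha$, $r_n\to\chi$, $\operatorname{Im}\zeta_n\to0$; (H3) $\omega_n\ne0$, $\zeta_n\neq0$, $c_1|\zeta_n|\le|d_n|\le c_2|\zeta_n|$ and $|c_n|\le M/|\omega_n|$ for all $n$; (H4) $|R_n|\le\mu n^{-\nu}(|C_n|^2+|d_nD_n|^2)^{1/2}$ for $n\ge n'$ and $|R_n|\le\mu(|C_n|^2+|d_nD_n|^2)^{1/2}$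 for $n\le n'$; (H5) $\sum_n(|C_n|^2+|d_nD_n|^2)<\infty$. For $n_0\in\mathbb{N}$ and $t\in\mathbb{R}$, $u_1^{n_0}(t)=\sum_{n\ge n_0}\big(C_ne^{i\omega_nt}+\overline{C_n}e^{-i\overline{\omega_n}t}+R_ne^{r_nt}+D_ne^{i\zeta_nt}+\overline{D_n}e^{-i\overline{\zeta_n}t}\big)$, $u_2^{n_0}(t)=\sum_{n\ge n_0}\big(d_nD_ne^{i\zeta_nt}+\overline{d_nD_n}e^{-i\overline{\zeta_n}t}+c_nC_ne^{i\omega_nt}+\overline{c_nC_n}e^{-i\overline{\omega_n}t}\big)$. For $T>0$, $k(t):=\sin(\pi t/T)$ for $t\in[0,T]$ and $k(t):=0$ otherwise. *)

theory Defs
  imports "HOL-Analysis.Analysis"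
begin

definition kweight :: "real \<Rightarrow> real \<Rightarrow> real" where
  "kweight T t = (if 0 \<le> t \<and> t \<le> T then sin (pi * t / T) else 0)"

definition u1_partial ::
  "(nat \<Rightarrow> complex) \<Rightarrow> (nat \<Rightarrow> complex) \<Rightarrow> (nat \<Rightarrow> real) \<Rightarrow>
   (nat \<Rightarrow> complex) \<Rightarrow> (nat \<Rightarrow> complex) \<Rightarrow> (nat \<Rightarrow> real) \<Rightarrow>
   nat \<Rightarrow> nat \<Rightarrow> real \<Rightarrow> complex" where
  "u1_partial \<omega> \<zeta> r C D R n0 N t =
     (\<Sum>n\<in>{n0..N}. C n * exp (\<i> * \<omega> n * of_real t)
        + cnj (C n) * exp (- \<i> * cnj (\<omega> n) * of_real t)
        + of_real (R n * exp (r n * t))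
        + D n * exp (\<i> * \<zeta> n * of_real t)
        + cnj (D n) * exp (- \<i> * cnj (\<zeta> n) * of_real t))"

definition u2_partial ::
  "(nat \<Rightarrow> complex) \<Rightarrow> (nat \<Rightarrow> complex) \<Rightarrow> (nat \<Rightarrow> complex) \<Rightarrow> (nat \<Rightarrow> complex) \<Rightarrow>
   (nat \<Rightarrow> complex) \<Rightarrow> (nat \<Rightarrow> complex) \<Rightarrow>
   nat \<Rightarrow> nat \<Rightarrow> real \<Rightarrow> complex" where
  "u2_partial \<omega> \<zeta> c d C D n0 N t =
     (\<Sum>n\<in>{n0..N}. d n * D n * exp (\<i> * \<zeta> n * of_real t)
        + cnj (d n * D n) * exp (- \<i> * cnj (\<zeta> n) * of_real t)
        + c n * C n * exp (\<i> * \<omega> n * of_real t)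
        + cnj (c n * C n) * exp (- \<i> * cnj (\<omega> n) * of_real t))"

text \<open>The weighted energy integral of the N-th partial sums; the integral of
  k (|u_1^{n0}|^2 + |u_2^{n0}|^2) is understood as the limit N \<rightarrow> \<infinity> of these
  (the series converge in L^2(0,T)).\<close>
definition energy_partial ::
  "(nat \<Rightarrow> complex) \<Rightarrow> (nat \<Rightarrow> complex) \<Rightarrow> (nat \<Rightarrow> complex) \<Rightarrow> (nat \<Rightarrow> complex) \<Rightarrow>
   (nat \<Rightarrow> real) \<Rightarrow> (nat \<Rightarrow> complex) \<Rightarrow> (nat \<Rightarrow> complex) \<Rightarrow> (nat \<Rightarrow> real) \<Rightarrow>
   real \<Rightarrow> nat \<Rightarrow> nat \<Rightarrow> real" where
  "energy_partial \<omega> \<zeta> c d r C D R T n0 N =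
     integral {0..} (\<lambda>t. kweight T t *
        ((cmod (u1_partial \<omega> \<zeta> r C D R n0 N t))\<^sup>2
         + (cmod (u2_partial \<omega> \<zeta> c d C D n0 N t))\<^sup>2))"

end

theory Submission
  imports Defs
begin

(* The weight sin (pi t / T) makes the energy of an exponential sum
   sum_n a_n e^{i l_n t} an explicit quadratic form: its kernel is
   K(z) = int_0^T sin (pi t / T) e^{i z t} dt = (pi/T) (1 + e^{i z T}) / ((pi/T)^2 - z^2).
   If the real parts of the l_n are separated by a gap g >= 2 q pi / T with q > 1 and their
   imaginary parts are small, the off-diagonal entries are dominated by 1 / (4 (i - j)^2 - 1),
   whose row sums are at most 1, and Schur's test gives Ingham-type upper and lower bounds
   with lower constant about 2 (T/pi) (1 - 1/q^2).  For T > Tm = 2 pi / (gamma sqrt (1 - eps))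
   such a q exists with g < gamma, so the gap condition holds from some n0 on.

   In u_2 the zeta-modes carry the energy: d_n D_n e^{i zeta_n t} + conj is a real part, whose
   cross terms oscillate with frequencies zeta_i + zeta_j and are negligible once Re zeta_n0
   is large; the omega-modes are damped by |c_n| <= M / |omega_n| and cost only a fraction of
   that energy for n0 large.  As |C_n| <= M |d_n D_n|, this bounds the whole coefficient sum.
   To make n0 independent of T the estimate is proved on [0, min T (2 Tm)] and transferred to
   [0, T] by concavity of sin.  The upper Ingham bounds make the partial energies a Cauchy
   sequence, so the energy is a limit. *)

section \<open>Sine-weighted energy\<close>

definition sine_energy :: "real \<Rightarrow> (real \<Rightarrow> complex) \<Rightarrow> real" where
  "sine_energy T f = integral {0..T} (\<lambda>t. sin (pi * t / T) * (cmod (f t))\<^sup>2)"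

lemma sin_weight_nonneg: "0 < T \<Longrightarrow> t \<in> {0..T} \<Longrightarrow> 0 \<le> sin (pi * t / T)"
  by (rule sin_ge_zero) (auto simp: field_simps)

lemma sine_energy_integrable:
  "0 < T \<Longrightarrow> continuous_on {0..T} f \<Longrightarrow>
    (\<lambda>t. sin (pi * t / T) * (cmod (f t))\<^sup>2) integrable_on {0..T}"
  by (intro integrable_continuous_interval continuous_intros) auto

lemma sine_energy_nonneg: "0 < T \<Longrightarrow> continuous_on {0..T} f \<Longrightarrow> 0 \<le> sine_energy T f"
  unfolding sine_energy_def
  by (rule integral_nonneg[OF sine_energy_integrable]) (auto intro!: mult_nonneg_nonneg sin_weight_nonneg)

lemma sine_energy_minus_commute: "sine_energy T (\<lambda>t. f t - g t) = sine_energy T (\<lambda>t. g t - f t)"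
  unfolding sine_energy_def by (simp add: norm_minus_commute)

lemma sine_energy_le_add:
  assumes T: "0 < T" and cont: "continuous_on {0..T} f" "continuous_on {0..T} g" "continuous_on {0..T} h"
    and le: "\<And>t. t \<in> {0..T} \<Longrightarrow> (cmod (f t))\<^sup>2 \<le> a * (cmod (g t))\<^sup>2 + b * (cmod (h t))\<^sup>2"
  shows "sine_energy T f \<le> a * sine_energy T g + b * sine_energy T h"
proof -
  let ?w = "\<lambda>t. sin (pi * t / T)"
  have "sine_energy T f \<le> integral {0..T} (\<lambda>t. a * (?w t * (cmod (g t))\<^sup>2) + b * (?w t * (cmod (h t))\<^sup>2))"
    unfolding sine_energy_def
  proof (rule integral_le[OF sine_energy_integrable[OF T cont(1)]])
    show "(\<lambda>t. a * (?w t * (cmod (g t))\<^sup>2) + b * (?w t * (cmod (h t))\<^sup>2)) integrable_on {0..T}"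
      using T cont by (intro integrable_add integrable_on_mult_right sine_energy_integrable)
    fix t assume t: "t \<in> {0..T}"
    have "?w t * (cmod (f t))\<^sup>2 \<le> ?w t * (a * (cmod (g t))\<^sup>2 + b * (cmod (h t))\<^sup>2)"
      by (rule mult_left_mono[OF le[OF t] sin_weight_nonneg[OF T t]])
    then show "?w t * (cmod (f t))\<^sup>2 \<le> a * (?w t * (cmod (g t))\<^sup>2) + b * (?w t * (cmod (h t))\<^sup>2)"
      by (simp add: algebra_simps)
  qed
  also have "\<dots> = a * sine_energy T g + b * sine_energy T h"
    unfolding sine_energy_def using T cont
    by (subst integral_add) (auto intro!: integrable_on_mult_right sine_energy_integrable)
  finally show ?thesis .
qed

lemma sine_energy_le_scale:
  assumes "0 < T" "continuous_on {0..T} f" "continuous_on {0..T} g"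
    and "\<And>t. t \<in> {0..T} \<Longrightarrow> (cmod (f t))\<^sup>2 \<le> a * (cmod (g t))\<^sup>2"
  shows "sine_energy T f \<le> a * sine_energy T g"
  using sine_energy_le_add[OF assms(1-3,3), of a 0] assms(4) by simp

lemma norm_add_sq_le:
  fixes x y :: "'a::real_normed_vector"
  assumes "0 < \<theta>"
  shows "(norm (x + y))\<^sup>2 \<le> (1 + \<theta>) * (norm x)\<^sup>2 + (1 + 1 / \<theta>) * (norm y)\<^sup>2"
proof -
  have "(norm (x + y))\<^sup>2 \<le> (norm x + norm y)\<^sup>2"
    by (simp add: norm_triangle_ineq power_mono)
  also have "\<dots> \<le> (1 + \<theta>) * (norm x)\<^sup>2 + (1 + 1 / \<theta>) * (norm y)\<^sup>2"
  proof -
    have "0 \<le> (\<theta> * norm x - norm y)\<^sup>2 / \<theta>" using assms by simp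
    also have "\<dots> = \<theta> * (norm x)\<^sup>2 - 2 * norm x * norm y + (norm y)\<^sup>2 / \<theta>"
      using assms by (simp add: power2_eq_square field_simps)
    finally show ?thesis by (simp add: power2_eq_square algebra_simps add_divide_distrib)
  qed
  finally show ?thesis .
qed

lemma sine_energy_add_le:
  assumes "0 < T" "continuous_on {0..T} f" "continuous_on {0..T} g" "0 < \<theta>"
  shows "sine_energy T (\<lambda>t. f t + g t) \<le> (1 + \<theta>) * sine_energy T f + (1 + 1 / \<theta>) * sine_energy T g"
  using assms by (intro sine_energy_le_add norm_add_sq_le continuous_intros)

lemma sine_energy_add_le_double:
  assumes "0 < T" "continuous_on {0..T} f" "continuous_on {0..T} g"
  shows "sine_energy T (\<lambda>t. f t + g t) \<le> 2 * sine_energy T f + 2 * sine_energy T g"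
  using sine_energy_add_le[OF assms, of 1] by simp

text \<open>The optimal choice is \<open>\<theta> = sqrt (b / a)\<close>; the degenerate cases \<open>a = 0\<close>, \<open>b = 0\<close>
  need \<open>\<theta> \<rightarrow> \<infinity>\<close> resp. \<open>\<theta> \<rightarrow> 0\<close>.\<close>
lemma sqrt_le_add_sqrt_if_forall_theta:
  assumes a: "0 \<le> a" and b: "0 \<le> b"
    and le: "\<And>\<theta>. 0 < \<theta> \<Longrightarrow> x \<le> (1 + \<theta>) * a + (1 + 1 / \<theta>) * b"
  shows "sqrt x \<le> sqrt a + sqrt b"
proof -
  have "x \<le> (sqrt a + sqrt b)\<^sup>2"
  proof (cases "a = 0 \<or> b = 0")
    case True
    have "x \<le> a + b + e" if e: "0 < e" for e
    proof (cases "a = 0")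
      case True
      then have "x \<le> b + b * (e / (b + 1))"
        using le[of "(b + 1) / e"] e b by (simp add: field_simps)
      also have "b * (e / (b + 1)) \<le> e"
        using e b by (simp add: field_simps)
      finally show ?thesis using True by simp
    next
      case False
      with \<open>a = 0 \<or> b = 0\<close> have "b = 0" by simp
      then have "x \<le> a + a * (e / (a + 1))"
        using le[of "e / (a + 1)"] e a by (simp add: algebra_simps)
      also have "a * (e / (a + 1)) \<le> e"
        using e a by (simp add: field_simps)
      finally show ?thesis using \<open>b = 0\<close> by simp
    qed
    then have "x \<le> a + b" by (rule field_le_epsilon)
    then show ?thesis using True a b by auto
  next
    case False
    then have ab: "0 < sqrt a" "0 < sqrt b" using a b by auto
    have "x \<le> (1 + sqrt b / sqrt a) * a + (1 + 1 / (sqrt b / sqrt a)) * b"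
      using ab by (intro le) simp
    also have "\<dots> = (sqrt a + sqrt b)\<^sup>2"
      using ab a b by (simp add: field_simps power2_eq_square)
    finally show ?thesis .
  qed
  from real_sqrt_le_mono[OF this] show ?thesis using a b by simp
qed

lemma sqrt_sine_energy_add_le:
  assumes "0 < T" "continuous_on {0..T} f" "continuous_on {0..T} g"
  shows "sqrt (sine_energy T (\<lambda>t. f t + g t)) \<le> sqrt (sine_energy T f) + sqrt (sine_energy T g)"
  using assms by (intro sqrt_le_add_sqrt_if_forall_theta sine_energy_nonneg sine_energy_add_le)

lemma sine_energy_convergent:
  assumes T: "0 < T" and cont: "\<And>N. continuous_on {0..T} (u N)" and B: "B \<longlonglongrightarrow> 0"
    and tail: "\<And>N M. N0 \<le> N \<Longrightarrow> N \<le> M \<Longrightarrow> sine_energy T (\<lambda>t. u M t - u N t) \<le> B N"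
  shows "convergent (\<lambda>N. sine_energy T (u N))"
proof -
  define x where "x N = sqrt (sine_energy T (u N))" for N
  have x_diff: "\<bar>x M - x N\<bar> \<le> sqrt (B N)" if "N0 \<le> N" "N \<le> M" for M N
  proof -
    have cont_diff: "continuous_on {0..T} (\<lambda>t. u M t - u N t)" "continuous_on {0..T} (\<lambda>t. u N t - u M t)"
      by (intro continuous_intros cont)+
    have "sqrt (sine_energy T (\<lambda>t. u M t - u N t)) \<le> sqrt (B N)"
      using tail[OF that] by simp
    moreover have "x M \<le> x N + sqrt (sine_energy T (\<lambda>t. u M t - u N t))"
      using sqrt_sine_energy_add_le[OF T cont[of N] cont_diff(1)] by (simp add: x_def)
    moreover have "x N \<le> x M + sqrt (sine_energy T (\<lambda>t. u M t - u N t))"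
      using sqrt_sine_energy_add_le[OF T cont[of M] cont_diff(2)]
      by (simp add: x_def sine_energy_minus_commute[of T "u N"])
    ultimately show ?thesis by linarith
  qed
  have "Cauchy x"
  proof (rule CauchyI)
    fix e :: real assume e: "0 < e"
    obtain N1 where N1: "\<And>N. N1 \<le> N \<Longrightarrow> B N < (e / 2)\<^sup>2"
      using B e unfolding lim_sequentially by (metis dist_real_def abs_less_iff zero_less_divide_iff zero_less_numeral zero_less_power diff_zero)
    define K where "K = max N0 N1"
    have "sqrt (B K) < e / 2"
      using real_sqrt_less_mono[OF N1[of K]] e by (simp add: K_def)
    then have "\<bar>x m - x n\<bar> < e" if "K \<le> m" "K \<le> n" for m n
      using x_diff[of K m] x_diff[of K n] that unfolding K_def by auto
    then show "\<exists>K. \<forall>m\<ge>K. \<forall>n\<ge>K. norm (x m - x n) < e" by auto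
  qed
  then have "convergent (\<lambda>N. (x N)\<^sup>2)"
    unfolding Cauchy_convergent_iff convergent_def by (blast intro: tendsto_power)
  moreover have "(x N)\<^sup>2 = sine_energy T (u N)" for N
    using sine_energy_nonneg[OF T cont] by (simp add: x_def)
  ultimately show ?thesis by simp
qed

lemma mult_sin_le_sin_mult:
  assumes a: "0 < a" "a \<le> 1" and u: "0 \<le> u" "u \<le> pi"
  shows "a * sin u \<le> sin (a * u)"
proof -
  have "(\<lambda>v. sin (a * v) - a * sin v) 0 \<le> (\<lambda>v. sin (a * v) - a * sin v) u"
  proof (rule DERIV_nonneg_imp_nondecreasing[OF u(1)])
    fix x assume x: "0 \<le> x" "x \<le> u"
    have "((\<lambda>v. sin (a * v) - a * sin v) has_real_derivative (cos (a * x) * a - a * cos x)) (at x)"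
      by (auto intro!: derivative_eq_intros)
    moreover have "cos x \<le> cos (a * x)"
      using x a u by (intro cos_monotone_0_pi_le) (auto simp: mult_left_le_one_le)
    then have "0 \<le> cos (a * x) * a - a * cos x" using a by (simp add: algebra_simps)
    ultimately show "\<exists>y. ((\<lambda>v. sin (a * v) - a * sin v) has_real_derivative y) (at x) \<and> 0 \<le> y" by blast
  qed
  then show ?thesis by simp
qed

lemma sine_energy_mono_length:
  assumes T1: "0 < T1" "T1 \<le> T" and f: "continuous_on {0..T} f"
  shows "T1 / T * sine_energy T1 f \<le> sine_energy T f"
proof -
  have T: "0 < T" using T1 by simp
  have f1: "continuous_on {0..T1} f" using T1 by (intro continuous_on_subset[OF f]) auto
  have int: "(\<lambda>t. sin (pi * t / T) * (cmod (f t))\<^sup>2) integrable_on {0..T1}"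
    using f1 T by (intro integrable_continuous_interval continuous_intros) auto
  have "T1 / T * sine_energy T1 f = integral {0..T1} (\<lambda>t. T1 / T * (sin (pi * t / T1) * (cmod (f t))\<^sup>2))"
    unfolding sine_energy_def by simp
  also have "\<dots> \<le> integral {0..T1} (\<lambda>t. sin (pi * t / T) * (cmod (f t))\<^sup>2)"
  proof (rule integral_le[OF integrable_on_mult_right[OF sine_energy_integrable[OF T1(1) f1]] int])
    fix t assume t: "t \<in> {0..T1}"
    have "T1 / T * sin (pi * t / T1) \<le> sin (T1 / T * (pi * t / T1))"
      using t T1 by (intro mult_sin_le_sin_mult) (auto simp: field_simps)
    also have "T1 / T * (pi * t / T1) = pi * t / T" using T1 by (simp add: field_simps)
    finally have "T1 / T * sin (pi * t / T1) * (cmod (f t))\<^sup>2 \<le> sin (pi * t / T) * (cmod (f t))\<^sup>2"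
      by (rule mult_right_mono) simp
    then show "T1 / T * (sin (pi * t / T1) * (cmod (f t))\<^sup>2) \<le> sin (pi * t / T) * (cmod (f t))\<^sup>2"
      by (simp only: mult.assoc)
  qed
  also have "\<dots> \<le> sine_energy T f"
    unfolding sine_energy_def
    using T1 int sine_energy_integrable[OF T f] sin_weight_nonneg[OF T]
    by (intro integral_subset_le) auto
  finally show ?thesis .
qed

section \<open>The sine kernel\<close>

definition sine_kernel :: "real \<Rightarrow> complex \<Rightarrow> complex" where
  "sine_kernel T z = integral {0..T} (\<lambda>t. of_real (sin (pi * t / T)) * exp (\<i> * z * of_real t))"

lemma has_integral_sine_kernel:
  "0 < T \<Longrightarrow> ((\<lambda>t. of_real (sin (pi * t / T)) * exp (\<i> * z * of_real t)) has_integral sine_kernel T z) {0..T}"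
  unfolding sine_kernel_def
  by (intro integrable_integral integrable_continuous_interval continuous_intros) auto

lemma sine_kernel_eq:
  assumes T: "0 < T" and nz: "z\<^sup>2 \<noteq> (of_real (pi / T))\<^sup>2"
  shows "sine_kernel T z = of_real (pi / T) * (1 + exp (\<i> * z * of_real T)) / ((of_real (pi / T))\<^sup>2 - z\<^sup>2)"
proof -
  define B :: complex where "B = of_real (pi / T)"
  have Dnz: "B\<^sup>2 - z\<^sup>2 \<noteq> 0" using nz unfolding B_def by simp
  define G where "G w = exp (\<i> * z * w) * (\<i> * z * sin (B * w) - B * cos (B * w)) / (B\<^sup>2 - z\<^sup>2)" for w
  have dG: "(G has_field_derivative (sin (B * w) * exp (\<i> * z * w))) (at w)" for w
  proof -
    have "(G has_field_derivative
       ((exp (\<i> * z * w) * (\<i> * z)) * (\<i> * z * sin (B * w) - B * cos (B * w))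
         + exp (\<i> * z * w) * (\<i> * z * (cos (B * w) * B) - B * (- sin (B * w) * B))) / (B\<^sup>2 - z\<^sup>2)) (at w)"
      unfolding G_def using Dnz by (auto intro!: derivative_eq_intros)
    moreover have "((exp (\<i> * z * w) * (\<i> * z)) * (\<i> * z * sin (B * w) - B * cos (B * w))
         + exp (\<i> * z * w) * (\<i> * z * (cos (B * w) * B) - B * (- sin (B * w) * B))) / (B\<^sup>2 - z\<^sup>2)
        = sin (B * w) * exp (\<i> * z * w)"
      using Dnz by (simp add: field_simps power2_eq_square)
    ultimately show ?thesis by simp
  qed
  have "((\<lambda>t. of_real (sin (pi * t / T)) * exp (\<i> * z * of_real t)) has_integral
        (G (of_real T) - G (of_real 0))) {0..T}"
  proof (rule has_integral_eq[OF _ fundamental_theorem_of_calculus[of 0 T "\<lambda>t. G (of_real t)"]])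
    show "0 \<le> T" using T by simp
    fix t :: real
    show "((\<lambda>t. G (of_real t)) has_vector_derivative (sin (B * of_real t) * exp (\<i> * z * of_real t))) (at t within {0..T})"
      by (rule has_vector_derivative_real_field[OF dG])
    have "B * of_real t = of_real (pi * t / T)" unfolding B_def by simp
    then have "sin (B * of_real t) = of_real (sin (pi * t / T))"
      by (metis sin_of_real)
    then show "sin (B * of_real t) * exp (\<i> * z * of_real t) = of_real (sin (pi * t / T)) * exp (\<i> * z * of_real t)"
      by simp
  qed
  moreover have "G (of_real T) - G (of_real 0) = B * (1 + exp (\<i> * z * of_real T)) / (B\<^sup>2 - z\<^sup>2)"
  proof -
    have "B * of_real T = of_real pi" unfolding B_def using T by simp
    then have "G (of_real T) = exp (\<i> * z * of_real T) * B / (B\<^sup>2 - z\<^sup>2)"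
      unfolding G_def by (simp add: sin_of_real cos_of_real)
    moreover have "G (of_real 0) = - B / (B\<^sup>2 - z\<^sup>2)" unfolding G_def by simp
    ultimately show ?thesis using Dnz by (simp add: field_simps)
  qed
  ultimately show ?thesis unfolding sine_kernel_def B_def by (simp add: integral_unique)
qed

lemma sine_kernel_0: "0 < T \<Longrightarrow> sine_kernel T 0 = of_real (2 * T / pi)"
  using sine_kernel_eq[of T 0] by (simp add: field_simps power2_eq_square)

lemma has_integral_sin_weight: "0 < T \<Longrightarrow> ((\<lambda>t. sin (pi * t / T)) has_integral (2 * T / pi)) {0..T}"
  using has_integral_Re[OF has_integral_sine_kernel[of T 0]] sine_kernel_0[of T] by simp

lemma sine_energy_const: "0 < T \<Longrightarrow> sine_energy T (\<lambda>t. of_real c) = c\<^sup>2 * (2 * T / pi)"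
  unfolding sine_energy_def using integral_unique[OF has_integral_mult_right[OF has_integral_sin_weight, of T "c\<^sup>2"]]
  by (simp add: mult.commute)

lemma sine_energy_real_exp_sum_le:
  assumes T: "0 < T" and r: "\<And>n. \<bar>r n\<bar> \<le> \<rho>"
  shows "sine_energy T (\<lambda>t. \<Sum>n\<in>I. of_real (R n * exp (r n * t)))
           \<le> (exp (\<rho> * T))\<^sup>2 * (2 * T / pi) * (\<Sum>n\<in>I. \<bar>R n\<bar>)\<^sup>2"
proof -
  define c0 where "c0 = (\<Sum>n\<in>I. \<bar>R n\<bar>) * exp (\<rho> * T)"
  have "sine_energy T (\<lambda>t. \<Sum>n\<in>I. of_real (R n * exp (r n * t))) \<le> 1 * sine_energy T (\<lambda>t. of_real c0)"
  proof (rule sine_energy_le_scale[OF T])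
    fix t assume t: "t \<in> {0..T}"
    have "cmod (\<Sum>n\<in>I. of_real (R n * exp (r n * t))) \<le> (\<Sum>n\<in>I. \<bar>R n\<bar> * exp (r n * t))"
      by (rule order_trans[OF norm_sum]) (simp add: norm_mult)
    also have "\<dots> \<le> (\<Sum>n\<in>I. \<bar>R n\<bar> * exp (\<rho> * T))"
    proof (intro sum_mono mult_left_mono)
      fix n
      have "r n * t \<le> \<bar>r n\<bar> * t" using t by (intro mult_right_mono) auto
      also have "\<dots> \<le> \<rho> * T" using t r[of n] by (intro mult_mono) auto
      finally show "exp (r n * t) \<le> exp (\<rho> * T)" by simp
    qed simp
    also have "\<dots> = c0" unfolding c0_def by (simp add: sum_distrib_right)
    finally show "(cmod (\<Sum>n\<in>I. of_real (R n * exp (r n * t))))\<^sup>2 \<le> 1 * (cmod (of_real c0 :: complex))\<^sup>2"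
      by (simp add: power_mono)
  qed (intro continuous_intros)+
  also have "\<dots> = (exp (\<rho> * T))\<^sup>2 * (2 * T / pi) * (\<Sum>n\<in>I. \<bar>R n\<bar>)\<^sup>2"
    using sine_energy_const[OF T, of c0] unfolding c0_def by (simp add: power_mult_distrib)
  finally show ?thesis .
qed

lemma norm_sine_kernel_le_off_resonance:
  assumes T: "0 < T" and Re: "(pi / T)\<^sup>2 < (Re z)\<^sup>2" and Im: "\<bar>Im z\<bar> \<le> H"
  shows "cmod (sine_kernel T z) \<le> pi / T * (1 + exp (H * T)) / ((Re z)\<^sup>2 - (pi / T)\<^sup>2)"
proof -
  define b where "b = pi / T"
  have b: "0 < b" unfolding b_def using T by simp
  have pos: "0 < (Re z)\<^sup>2 - b\<^sup>2" using Re unfolding b_def by simp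
  have le: "(Re z)\<^sup>2 - b\<^sup>2 \<le> cmod ((of_real b)\<^sup>2 - z\<^sup>2)"
  proof -
    have "(of_real b)\<^sup>2 - z\<^sup>2 = (of_real b - z) * (of_real b + z)"
      by (simp add: power2_eq_square algebra_simps)
    then have "cmod ((of_real b)\<^sup>2 - z\<^sup>2) = cmod (of_real b - z) * cmod (of_real b + z)"
      by (simp add: norm_mult)
    moreover have "\<bar>b - Re z\<bar> \<le> cmod (of_real b - z)" using abs_Re_le_cmod[of "of_real b - z"] by simp
    moreover have "\<bar>b + Re z\<bar> \<le> cmod (of_real b + z)" using abs_Re_le_cmod[of "of_real b + z"] by simp
    ultimately have "\<bar>b - Re z\<bar> * \<bar>b + Re z\<bar> \<le> cmod ((of_real b)\<^sup>2 - z\<^sup>2)"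
      by (simp add: mult_mono)
    moreover have "\<bar>b - Re z\<bar> * \<bar>b + Re z\<bar> = \<bar>b\<^sup>2 - (Re z)\<^sup>2\<bar>"
      by (simp add: abs_mult[symmetric] power2_eq_square algebra_simps)
    ultimately show ?thesis using pos by simp
  qed
  have nz: "z\<^sup>2 \<noteq> (of_real b)\<^sup>2" using le pos by auto
  have num: "cmod (1 + exp (\<i> * z * of_real T)) \<le> 1 + exp (H * T)"
  proof -
    have "cmod (1 + exp (\<i> * z * of_real T)) \<le> 1 + cmod (exp (\<i> * z * of_real T))"
      using norm_triangle_ineq[of 1 "exp (\<i> * z * of_real T)"] by simp
    moreover have "- Im z * T \<le> H * T" using Im T by (intro mult_right_mono) auto
    then have "cmod (exp (\<i> * z * of_real T)) \<le> exp (H * T)" by simp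
    ultimately show ?thesis by linarith
  qed
  have "cmod (sine_kernel T z) = b * cmod (1 + exp (\<i> * z * of_real T)) / cmod ((of_real b)\<^sup>2 - z\<^sup>2)"
    using sine_kernel_eq[OF T nz[unfolded b_def]] b T unfolding b_def by (simp add: norm_mult norm_divide)
  also have "\<dots> \<le> b * (1 + exp (H * T)) / ((Re z)\<^sup>2 - b\<^sup>2)"
    using num le pos b by (intro frac_le mult_left_mono) auto
  finally show ?thesis unfolding b_def .
qed

lemma Re_sine_kernel_ge:
  assumes T: "0 < T" and z: "Re z = 0"
  shows "exp (- \<bar>Im z\<bar> * T) * (2 * T / pi) \<le> Re (sine_kernel T z)"
  using has_integral_mult_right[OF has_integral_sin_weight[OF T], of "exp (- \<bar>Im z\<bar> * T)"]
proof (rule has_integral_le[OF _ has_integral_Re[OF has_integral_sine_kernel[OF T, of z]]])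
  fix t assume t: "t \<in> {0..T}"
  have e: "\<i> * z * of_real t = of_real (- Im z * t)"
    using z by (simp add: complex_eq_iff)
  have "exp (- \<bar>Im z\<bar> * T) \<le> exp (- Im z * t)"
    using t T by (auto simp: abs_if mult_mono)
  then have "exp (- \<bar>Im z\<bar> * T) * sin (pi * t / T) \<le> exp (- Im z * t) * sin (pi * t / T)"
    using sin_weight_nonneg[OF T t] by (rule mult_right_mono)
  then show "exp (- \<bar>Im z\<bar> * T) * sin (pi * t / T) \<le> Re (of_real (sin (pi * t / T)) * exp (\<i> * z * of_real t))"
    unfolding e exp_of_real by (simp add: mult.commute)
qed

lemma norm_sine_kernel_le:
  assumes T: "0 < T" and H: "\<bar>Im z\<bar> \<le> H"
  shows "cmod (sine_kernel T z) \<le> T * exp (H * T)"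
proof -
  have "cmod (of_real (sin (pi * t / T)) * exp (\<i> * z * of_real t)) \<le> exp (H * T)"
    if t: "t \<in> {0..T} - {}" for t
  proof -
    have "- Im z * t \<le> \<bar>Im z\<bar> * t" using t by (intro mult_right_mono) auto
    also have "\<dots> \<le> H * T" using t H by (intro mult_mono) auto
    finally have "- Im z * t \<le> H * T" .
    then have "cmod (exp (\<i> * z * of_real t)) \<le> exp (H * T)" by simp
    moreover have "\<bar>sin (pi * t / T)\<bar> \<le> 1" by simp
    ultimately show ?thesis
      unfolding norm_mult norm_of_real using mult_mono[of "\<bar>sin (pi * t / T)\<bar>" 1] by simp
  qed
  from has_integral_bound_real[OF _ _ has_integral_sine_kernel[OF T] this, of "{}"] show ?thesis
    using T by (simp add: mult.commute)
qed

section \<open>Exponential sums\<close>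

definition exp_sum :: "('a \<Rightarrow> complex) \<Rightarrow> ('a \<Rightarrow> complex) \<Rightarrow> 'a set \<Rightarrow> real \<Rightarrow> complex" where
  "exp_sum a l I t = (\<Sum>i\<in>I. a i * exp (\<i> * l i * of_real t))"

lemma continuous_on_exp_sum [continuous_intros]: "continuous_on S (exp_sum a l I)"
  unfolding exp_sum_def by (intro continuous_intros)

lemma cnj_exp_sum: "cnj (exp_sum a l I t) = exp_sum (\<lambda>i. cnj (a i)) (\<lambda>i. - cnj (l i)) I t"
  unfolding exp_sum_def by (simp add: exp_cnj)

lemma has_integral_exp_sum_mult:
  assumes "0 < T" "finite I" "finite J"
  shows "((\<lambda>t. of_real (sin (pi * t / T)) * (exp_sum a l I t * exp_sum c m J t)) has_integral
           (\<Sum>i\<in>I. \<Sum>j\<in>J. a i * c j * sine_kernel T (l i + m j))) {0..T}"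
proof -
  let ?w = "\<lambda>t. of_real (sin (pi * t / T)) :: complex"
  have "((\<lambda>t. \<Sum>i\<in>I. \<Sum>j\<in>J. a i * c j * (?w t * exp (\<i> * (l i + m j) * of_real t))) has_integral
          (\<Sum>i\<in>I. \<Sum>j\<in>J. a i * c j * sine_kernel T (l i + m j))) {0..T}"
    using assms by (intro has_integral_sum has_integral_mult_right has_integral_sine_kernel) auto
  moreover have "?w t * (exp_sum a l I t * exp_sum c m J t) =
                 (\<Sum>i\<in>I. \<Sum>j\<in>J. a i * c j * (?w t * exp (\<i> * (l i + m j) * of_real t)))" for t
  proof -
    have "?w t * (exp_sum a l I t * exp_sum c m J t) =
          (\<Sum>i\<in>I. \<Sum>j\<in>J. ?w t * ((a i * exp (\<i> * l i * of_real t)) * (c j * exp (\<i> * m j * of_real t))))"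
      unfolding exp_sum_def by (subst sum_product) (simp only: sum_distrib_left)
    then show ?thesis by (simp add: exp_add[symmetric] algebra_simps)
  qed
  ultimately show ?thesis by simp
qed

lemma sine_energy_exp_sum:
  assumes "0 < T" "finite I"
  shows "sine_energy T (exp_sum a l I) =
           Re (\<Sum>i\<in>I. \<Sum>j\<in>I. a i * cnj (a j) * sine_kernel T (l i - cnj (l j)))"
proof -
  let ?f = "exp_sum a l I"
  have "((\<lambda>t. of_real (sin (pi * t / T)) * (?f t * cnj (?f t))) has_integral
          (\<Sum>i\<in>I. \<Sum>j\<in>I. a i * cnj (a j) * sine_kernel T (l i - cnj (l j)))) {0..T}"
    using has_integral_exp_sum_mult[OF assms assms(2), of a l "\<lambda>j. cnj (a j)" "\<lambda>j. - cnj (l j)"]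
    by (simp add: cnj_exp_sum)
  from has_integral_Re[OF this]
  have "((\<lambda>t. sin (pi * t / T) * (cmod (?f t))\<^sup>2) has_integral
          Re (\<Sum>i\<in>I. \<Sum>j\<in>I. a i * cnj (a j) * sine_kernel T (l i - cnj (l j)))) {0..T}"
    by (simp flip: complex_norm_square)
  then show ?thesis unfolding sine_energy_def by (rule integral_unique)
qed

lemma sine_energy_exp_sum_diag_offdiag:
  assumes T: "0 < T" and I: "finite I"
  shows "sine_energy T (exp_sum a l I) =
           (\<Sum>i\<in>I. (cmod (a i))\<^sup>2 * Re (sine_kernel T (l i - cnj (l i))))
           + Re (\<Sum>i\<in>I. \<Sum>j\<in>I. a i * cnj (a j) * (if j = i then 0 else sine_kernel T (l i - cnj (l j))))"
proof -
  have "(\<Sum>j\<in>I. a i * cnj (a j) * sine_kernel T (l i - cnj (l j))) =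
          a i * cnj (a i) * sine_kernel T (l i - cnj (l i))
          + (\<Sum>j\<in>I. a i * cnj (a j) * (if j = i then 0 else sine_kernel T (l i - cnj (l j))))"
    if "i \<in> I" for i
    using that I by (simp add: sum.remove if_distrib sum.If_cases Diff_eq Int_absorb1 cong: if_cong)
  then have "(\<Sum>i\<in>I. \<Sum>j\<in>I. a i * cnj (a j) * sine_kernel T (l i - cnj (l j))) =
          (\<Sum>i\<in>I. a i * cnj (a i) * sine_kernel T (l i - cnj (l i)))
          + (\<Sum>i\<in>I. \<Sum>j\<in>I. a i * cnj (a j) * (if j = i then 0 else sine_kernel T (l i - cnj (l j))))"
    by (simp add: sum.distrib)
  moreover have "Re (a i * cnj (a i) * sine_kernel T (l i - cnj (l i))) =
                 (cmod (a i))\<^sup>2 * Re (sine_kernel T (l i - cnj (l i)))" for i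
  proof -
    have "a i * cnj (a i) = of_real ((cmod (a i))\<^sup>2)" by (simp only: complex_norm_square)
    then show ?thesis by simp
  qed
  ultimately show ?thesis
    by (simp only: sine_energy_exp_sum[OF T I] plus_complex.sel Re_sum)
qed

lemma norm_add_cnj_sq: "(cmod (z + cnj z))\<^sup>2 = 2 * (cmod z)\<^sup>2 + 2 * Re (z * z)"
  by (simp add: cmod_def power2_eq_square algebra_simps)

lemma sine_energy_exp_sum_add_cnj:
  assumes T: "0 < T" and I: "finite I"
  shows "sine_energy T (\<lambda>t. exp_sum a l I t + cnj (exp_sum a l I t)) =
           2 * sine_energy T (exp_sum a l I) + 2 * Re (\<Sum>i\<in>I. \<Sum>j\<in>I. a i * a j * sine_kernel T (l i + l j))"
proof -
  let ?f = "exp_sum a l I"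
  have "((\<lambda>t. sin (pi * t / T) * (cmod (?f t))\<^sup>2) has_integral sine_energy T ?f) {0..T}"
    unfolding sine_energy_def by (intro integrable_integral sine_energy_integrable T continuous_intros)
  from has_integral_add[OF has_integral_mult_right[OF this, of 2]
      has_integral_mult_right[OF has_integral_Re[OF has_integral_exp_sum_mult[OF T I I, of a l a l]], of 2]]
  have "((\<lambda>t. sin (pi * t / T) * (cmod (?f t + cnj (?f t)))\<^sup>2) has_integral
          2 * sine_energy T ?f + 2 * Re (\<Sum>i\<in>I. \<Sum>j\<in>I. a i * a j * sine_kernel T (l i + l j))) {0..T}"
    unfolding norm_add_cnj_sq by (simp add: algebra_simps)
  then show ?thesis unfolding sine_energy_def by (rule integral_unique)
qed

lemma norm_add_cnj_sq_le: "(cmod (z + cnj z))\<^sup>2 \<le> 4 * (cmod z)\<^sup>2"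
  by (simp add: cmod_def power2_eq_square algebra_simps)

lemma sine_energy_add_cnj_le:
  assumes "0 < T" "continuous_on {0..T} f"
  shows "sine_energy T (\<lambda>t. f t + cnj (f t)) \<le> 4 * sine_energy T f"
  using assms by (intro sine_energy_le_scale norm_add_cnj_sq_le continuous_intros)

section \<open>Ingham-type inequalities\<close>

definition ingham_coeff :: "real \<Rightarrow> real" where
  "ingham_coeff x = 1 / (4 * x\<^sup>2 - 1)"

lemma ingham_coeff_nonneg:
  assumes "1 \<le> \<bar>x\<bar>"
  shows "0 \<le> ingham_coeff x"
proof -
  have "1 \<le> x\<^sup>2" using power_mono[OF assms, of 2] by simp
  then show ?thesis unfolding ingham_coeff_def by simp
qed

lemma sum_ingham_coeff_telescope:
  assumes "1 \<le> P"
  shows "(\<Sum>m\<in>{P..<P+k}. ingham_coeff (real m)) = 1 / (2 * (2 * real P - 1)) - 1 / (2 * (2 * real (P + k) - 1))"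
proof (induction k)
  case 0 then show ?case by simp
next
  case (Suc k)
  define u where "u = 2 * real (P + k) - 1"
  have u: "0 < u" using assms unfolding u_def by simp
  have "ingham_coeff (real (P + k)) = 1 / (u * (u + 2))"
    unfolding ingham_coeff_def u_def by (simp add: power2_eq_square algebra_simps)
  also have "\<dots> = 1 / (2 * u) - 1 / (2 * (u + 2))"
    using u by (simp add: divide_simps)
  also have "u + 2 = 2 * real (P + Suc k) - 1" unfolding u_def by simp
  finally show ?case using Suc by (simp add: u_def)
qed

lemma sum_ingham_coeff_le:
  assumes "1 \<le> P"
  shows "(\<Sum>m\<in>{P..Q}. ingham_coeff (real m)) \<le> 1 / (2 * (2 * real P - 1))"
proof (cases "P \<le> Q")
  case True
  then have "{P..Q} = {P..<P + (Q + 1 - P)}" by auto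
  then show ?thesis using sum_ingham_coeff_telescope[OF assms, of "Q + 1 - P"] assms by simp
next
  case False
  then show ?thesis using assms by simp
qed

lemma sum_ingham_coeff_inj_le:
  assumes "inj_on h A" "h ` A \<subseteq> {P..Q}" "1 \<le> P"
  shows "(\<Sum>j\<in>A. ingham_coeff (real (h j))) \<le> 1 / (2 * (2 * real P - 1))"
proof -
  have "finite A" using assms(1,2) finite_imageD finite_subset by blast
  have "(\<Sum>j\<in>A. ingham_coeff (real (h j))) = (\<Sum>m\<in>h ` A. ingham_coeff (real m))"
    using assms(1) by (simp add: sum.reindex)
  also have "\<dots> \<le> (\<Sum>m\<in>{P..Q}. ingham_coeff (real m))"
    using assms by (intro sum_mono2 ingham_coeff_nonneg) auto
  also have "\<dots> \<le> 1 / (2 * (2 * real P - 1))" by (rule sum_ingham_coeff_le[OF assms(3)])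
  finally show ?thesis .
qed

lemma sum_offdiag_ingham_coeff_le:
  assumes "i \<in> {p..N}"
  shows "(\<Sum>j\<in>{p..N}. if j = i then 0 else ingham_coeff (real i - real j)) \<le> 1"
proof -
  let ?c = "\<lambda>j. if j = i then 0 else ingham_coeff (real i - real j)"
  have split: "{p..N} = {p..<i} \<union> {i} \<union> {i<..N}" using assms by auto
  have "sum ?c {p..N} = sum ?c {p..<i} + sum ?c {i} + sum ?c {i<..N}"
    unfolding split by (subst sum.union_disjoint; auto)+
  also have "sum ?c {p..<i} = (\<Sum>j\<in>{p..<i}. ingham_coeff (real (i - j)))"
    by (intro sum.cong) (auto simp: of_nat_diff)
  also have "sum ?c {i<..N} = (\<Sum>j\<in>{i<..N}. ingham_coeff (real (j - i)))"
    by (intro sum.cong) (auto simp: of_nat_diff ingham_coeff_def power2_commute)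
  also have "(\<Sum>j\<in>{p..<i}. ingham_coeff (real (i - j))) + sum ?c {i} + (\<Sum>j\<in>{i<..N}. ingham_coeff (real (j - i)))
      \<le> 1 / (2 * (2 * real (1::nat) - 1)) + 0 + 1 / (2 * (2 * real (1::nat) - 1))"
    by (intro add_mono sum_ingham_coeff_inj_le[where Q = i] sum_ingham_coeff_inj_le[where Q = N])
      (auto simp: inj_on_def)
  finally show ?thesis by simp
qed

lemma schur_test:
  fixes G :: "'a \<Rightarrow> 'a \<Rightarrow> complex"
  assumes I: "finite I"
    and G: "\<And>i j. i \<in> I \<Longrightarrow> j \<in> I \<Longrightarrow> cmod (G i j) \<le> B i j"
    and sym: "\<And>i j. i \<in> I \<Longrightarrow> j \<in> I \<Longrightarrow> B i j = B j i"
    and rows: "\<And>i. i \<in> I \<Longrightarrow> (\<Sum>j\<in>I. B i j) \<le> S"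
  shows "cmod (\<Sum>i\<in>I. \<Sum>j\<in>I. a i * c j * G i j) \<le> S / 2 * ((\<Sum>i\<in>I. (cmod (a i))\<^sup>2) + (\<Sum>i\<in>I. (cmod (c i))\<^sup>2))"
proof -
  have "cmod (\<Sum>i\<in>I. \<Sum>j\<in>I. a i * c j * G i j) \<le> (\<Sum>i\<in>I. \<Sum>j\<in>I. cmod (a i * c j * G i j))"
    by (rule order_trans[OF norm_sum sum_mono[OF norm_sum]])
  also have "\<dots> \<le> (\<Sum>i\<in>I. \<Sum>j\<in>I. ((cmod (a i))\<^sup>2 / 2 + (cmod (c j))\<^sup>2 / 2) * B i j)"
  proof (intro sum_mono)
    fix i j assume ij: "i \<in> I" "j \<in> I"
    have "cmod (a i) * cmod (c j) \<le> (cmod (a i))\<^sup>2 / 2 + (cmod (c j))\<^sup>2 / 2"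
      using sum_squares_bound[of "cmod (a i)" "cmod (c j)"] by (simp add: power2_eq_square)
    then show "cmod (a i * c j * G i j) \<le> ((cmod (a i))\<^sup>2 / 2 + (cmod (c j))\<^sup>2 / 2) * B i j"
      unfolding norm_mult using G[OF ij] by (intro mult_mono) auto
  qed
  also have "\<dots> = (\<Sum>i\<in>I. (cmod (a i))\<^sup>2 / 2 * (\<Sum>j\<in>I. B i j)) + (\<Sum>j\<in>I. (cmod (c j))\<^sup>2 / 2 * (\<Sum>i\<in>I. B i j))"
  proof -
    have "(\<Sum>i\<in>I. \<Sum>j\<in>I. (cmod (c j))\<^sup>2 / 2 * B i j) = (\<Sum>j\<in>I. \<Sum>i\<in>I. (cmod (c j))\<^sup>2 / 2 * B i j)"
      by (rule sum.swap)
    then show ?thesis by (simp only: distrib_right sum.distrib sum_distrib_left)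
  qed
  also have "\<dots> = (\<Sum>i\<in>I. (cmod (a i))\<^sup>2 / 2 * (\<Sum>j\<in>I. B i j)) + (\<Sum>j\<in>I. (cmod (c j))\<^sup>2 / 2 * (\<Sum>i\<in>I. B j i))"
    using sym by (intro arg_cong2[where f = "(+)"] refl sum.cong) auto
  also have "\<dots> \<le> (\<Sum>i\<in>I. (cmod (a i))\<^sup>2 / 2 * S) + (\<Sum>j\<in>I. (cmod (c j))\<^sup>2 / 2 * S)"
    using rows by (intro add_mono sum_mono mult_left_mono) auto
  also have "\<dots> = S / 2 * ((\<Sum>i\<in>I. (cmod (a i))\<^sup>2) + (\<Sum>i\<in>I. (cmod (c i))\<^sup>2))"
    by (simp add: sum_distrib_left sum_distrib_right algebra_simps)
  finally show ?thesis .
qed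

lemma gap_increment:
  assumes gap: "\<And>n. p \<le> n \<Longrightarrow> g \<le> x (Suc n) - x n" and "p \<le> i" "i \<le> j"
  shows "g * (real j - real i) \<le> x j - x i"
  using assms(3)
proof (induction j rule: dec_induct)
  case (step j)
  then show ?case using gap[of j] assms(2) by (simp add: algebra_simps)
qed simp

lemma abs_gap_increment:
  assumes gap: "\<And>n. p \<le> n \<Longrightarrow> g \<le> x (Suc n) - x n" and "0 \<le> g" "p \<le> i" "p \<le> j"
  shows "g * \<bar>real i - real j\<bar> \<le> \<bar>x i - x j\<bar>"
proof (cases "i \<le> j")
  case True
  then show ?thesis using gap_increment[of p g x, OF gap \<open>p \<le> i\<close> True] by (simp add: abs_if)
next
  case False
  then show ?thesis using gap_increment[of p g x, OF gap \<open>p \<le> j\<close>, of i] by (simp add: abs_if)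
qed

text \<open>Here \<open>b\<close> stands for \<open>pi / T\<close> and \<open>E\<close> for \<open>1 + exp (2 H T)\<close>: the left-hand side of the
  second claim is the bound of \<open>norm_sine_kernel_le_off_resonance\<close> at \<open>Re z = x\<close>.\<close>
lemma resonance_quotient_le_ingham_coeff:
  fixes b q g x d E :: real
  assumes b: "0 < b" and q: "1 \<le> q" and g: "2 * q * b \<le> g" and x: "g * d \<le> \<bar>x\<bar>"
    and d: "1 \<le> d" and E: "0 \<le> E"
  shows "b\<^sup>2 < x\<^sup>2" "b * E / (x\<^sup>2 - b\<^sup>2) \<le> E / (b * q\<^sup>2) * ingham_coeff d"
proof -
  have "2 * q * b * d \<le> g * d" using g d by (intro mult_right_mono) auto
  then have "2 * q * b * d \<le> \<bar>x\<bar>" using x by linarith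
  then have "(2 * q * b * d)\<^sup>2 \<le> \<bar>x\<bar>\<^sup>2"
    using q b d by (intro power_mono) auto
  then have x2: "4 * q\<^sup>2 * b\<^sup>2 * d\<^sup>2 \<le> x\<^sup>2" by (simp add: power_mult_distrib)
  have "b\<^sup>2 \<le> q\<^sup>2 * b\<^sup>2" using q by (simp add: mult_le_cancel_right1 one_le_power)
  then have low: "b\<^sup>2 * q\<^sup>2 * (4 * d\<^sup>2 - 1) \<le> x\<^sup>2 - b\<^sup>2" using x2 by (simp add: algebra_simps)
  have "1 \<le> d\<^sup>2" using d by (simp add: one_le_power)
  then have d2: "0 < 4 * d\<^sup>2 - 1" by linarith
  have lp: "0 < b\<^sup>2 * q\<^sup>2 * (4 * d\<^sup>2 - 1)" using d2 b q by simp
  then show "b\<^sup>2 < x\<^sup>2" using low by linarith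
  have "b * E / (x\<^sup>2 - b\<^sup>2) \<le> b * E / (b\<^sup>2 * q\<^sup>2 * (4 * d\<^sup>2 - 1))"
    using low lp b E by (intro divide_left_mono) auto
  also have "\<dots> = E / (b * q\<^sup>2) * ingham_coeff d"
    using b q d2 unfolding ingham_coeff_def by (simp add: field_simps power2_eq_square)
  finally show "b * E / (x\<^sup>2 - b\<^sup>2) \<le> E / (b * q\<^sup>2) * ingham_coeff d" .
qed

definition ingham_error :: "real \<Rightarrow> real \<Rightarrow> real \<Rightarrow> real" where
  "ingham_error T H q = (1 + exp (2 * H * T)) * (T / pi) / q\<^sup>2"

lemma ingham_error_eq: "ingham_error T H q = T / pi * ((1 + exp (2 * H * T)) * (1 / q\<^sup>2))"
  unfolding ingham_error_def by simp

lemma ingham_error_nonneg: "0 \<le> T \<Longrightarrow> 0 \<le> ingham_error T H q"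
  unfolding ingham_error_def by (simp add: add_nonneg_nonneg)

definition ingham_upper :: "real \<Rightarrow> real \<Rightarrow> real \<Rightarrow> real" where
  "ingham_upper T H q = T * exp (2 * H * T) + ingham_error T H q"

lemma ingham_upper_nonneg: "0 \<le> T \<Longrightarrow> 0 \<le> ingham_upper T H q"
  unfolding ingham_upper_def by (simp add: ingham_error_nonneg)

lemma ingham_error_mono:
  assumes T: "0 \<le> T" "T \<le> T'" and H: "0 \<le> H" and q: "1 \<le> q"
  shows "ingham_error T H q \<le> ingham_error T' H 1"
proof -
  have "ingham_error T H q \<le> (1 + exp (2 * H * T)) * (T / pi)"
    unfolding ingham_error_def using divide_left_mono[of 1 "q\<^sup>2" "(1 + exp (2 * H * T)) * (T / pi)"] T q
    by (simp add: one_le_power add_nonneg_nonneg)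
  also have "\<dots> \<le> ingham_error T' H 1"
    unfolding ingham_error_def using T H
    by (auto intro!: mult_mono divide_right_mono add_mono mult_left_mono)
  finally show ?thesis .
qed

lemma ingham_upper_mono:
  assumes T: "0 \<le> T" "T \<le> T'" and H: "0 \<le> H" and q: "1 \<le> q"
  shows "ingham_upper T H q \<le> ingham_upper T' H 1"
  unfolding ingham_upper_def using assms
  by (intro add_mono mult_mono ingham_error_mono) (auto intro!: mult_left_mono)

lemma ingham_lower_constant_ge:
  assumes T: "0 < T" and q: "1 \<le> q" and \<delta>: "0 < \<delta>" "1 / q\<^sup>2 \<le> 1 - \<delta>"
    and H: "0 \<le> H" "16 * H * T \<le> \<delta>"
  shows "3 / 2 * (T / pi * \<delta>) \<le> exp (- (2 * H * T)) * (2 * T / pi) - ingham_error T H q"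
proof -
  define x where "x = 2 * H * T"
  have "0 < 1 / q\<^sup>2" using q by simp
  then have "\<delta> \<le> 1" using \<delta>(2) by linarith
  moreover have "8 * x \<le> \<delta>" using H(2) unfolding x_def by (simp add: mult_ac)
  ultimately have x: "0 \<le> x" "8 * x \<le> \<delta>" "x \<le> 1 / 2"
    using H(1) T unfolding x_def by auto
  have exp_x: "exp x \<le> 1 + 2 * x" "1 - x \<le> exp (- x)"
    using exp_bound_lemma[of x] exp_ge_add_one_self[of "- x"] x by auto
  have "(1 + exp x) * (1 / q\<^sup>2) \<le> (2 + 2 * x) * (1 - \<delta>)"
    using exp_x x \<delta> by (intro mult_mono) auto
  also have "\<dots> \<le> 2 + 2 * x - 2 * \<delta>"
    using x \<delta> by (simp add: algebra_simps)
  finally have "3 / 2 * \<delta> \<le> 2 * exp (- x) - (1 + exp x) * (1 / q\<^sup>2)"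
    using exp_x x by linarith
  then have "T / pi * (3 / 2 * \<delta>) \<le> T / pi * (2 * exp (- x) - (1 + exp x) * (1 / q\<^sup>2))"
    using T by (intro mult_left_mono) auto
  then show ?thesis
    unfolding ingham_error_eq x_def by (simp add: algebra_simps)
qed

lemma ingham_error_le_quarter:
  assumes T: "0 < T" and q: "1 \<le> q" and \<delta>: "0 < \<delta>" "1 / q\<^sup>2 \<le> 1 - \<delta>"
    and H: "0 \<le> H" "16 * H * T \<le> \<delta>" and P: "8 / \<delta> \<le> 2 * real P - 1"
  shows "ingham_error T H q / (2 * (2 * real P - 1)) \<le> T / pi * (\<delta> / 4)"
proof -
  have "0 < 1 / q\<^sup>2" using q by simp
  then have "16 * H * T \<le> 1" using H(2) \<delta>(2) by linarith
  moreover have "0 \<le> 2 * H * T" using H(1) T by simp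
  ultimately have "exp (2 * H * T) \<le> 1 + 2 * (2 * H * T)"
    using exp_bound_lemma[of "2 * H * T"] by simp
  also have "\<dots> \<le> 2" using \<open>16 * H * T \<le> 1\<close> by simp
  finally have "(1 + exp (2 * H * T)) * (1 / q\<^sup>2) \<le> 3 * 1"
    using q by (intro mult_mono) auto
  then have "(1 + exp (2 * H * T)) * (1 / q\<^sup>2) / (2 * (2 * real P - 1)) \<le> 3 / (2 * (8 / \<delta>))"
    using P \<delta> by (intro frac_le) auto
  also have "\<dots> \<le> \<delta> / 4" using \<delta> by (simp add: field_simps)
  finally have "T / pi * ((1 + exp (2 * H * T)) * (1 / q\<^sup>2) / (2 * (2 * real P - 1))) \<le> T / pi * (\<delta> / 4)"
    using T by (intro mult_left_mono) auto
  then show ?thesis unfolding ingham_error_eq by simp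
qed

locale separated_frequencies =
  fixes T q g H :: real and l :: "nat \<Rightarrow> complex" and p :: nat
  assumes T_pos: "0 < T" and q_ge_1: "1 \<le> q" and gap_large: "2 * q * (pi / T) \<le> g"
    and gap: "\<And>n. p \<le> n \<Longrightarrow> g \<le> Re (l (Suc n)) - Re (l n)"
    and Im_le: "\<And>n. p \<le> n \<Longrightarrow> \<bar>Im (l n)\<bar> \<le> H"

begin

lemma gap_nonneg: "0 \<le> g"
proof -
  have "0 \<le> 2 * q * (pi / T)" using q_ge_1 T_pos by simp
  then show ?thesis using gap_large by linarith
qed

lemma abs_Re_diff_ge: "p \<le> i \<Longrightarrow> p \<le> j \<Longrightarrow> g * \<bar>real i - real j\<bar> \<le> \<bar>Re (l i) - Re (l j)\<bar>"
  using abs_gap_increment[of p g "\<lambda>n. Re (l n)", OF gap gap_nonneg] by simp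

lemma norm_sine_kernel_le_ingham_coeff:
  assumes x: "g * d \<le> \<bar>Re z\<bar>" and d: "1 \<le> d" and Im: "\<bar>Im z\<bar> \<le> 2 * H"
  shows "cmod (sine_kernel T z) \<le> ingham_error T H q * ingham_coeff d"
proof -
  define E where "E = 1 + exp (2 * H * T)"
  have b: "0 < pi / T" using T_pos by simp
  note bounds = resonance_quotient_le_ingham_coeff[OF b q_ge_1 gap_large x d, of E]
  have "cmod (sine_kernel T z) \<le> pi / T * E / ((Re z)\<^sup>2 - (pi / T)\<^sup>2)"
    using norm_sine_kernel_le_off_resonance[OF T_pos bounds(1) Im] unfolding E_def
    by (simp add: mult.commute mult.left_commute)
  also have "\<dots> \<le> E / (pi / T * q\<^sup>2) * ingham_coeff d"
    using bounds(2) by (simp add: E_def add_nonneg_nonneg)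
  also have "E / (pi / T * q\<^sup>2) = ingham_error T H q"
    unfolding E_def ingham_error_def by (simp add: field_simps)
  finally show ?thesis .
qed

lemma norm_offdiag_le:
  "cmod (\<Sum>i\<in>{p..N}. \<Sum>j\<in>{p..N}. a i * cnj (a j) * (if j = i then 0 else sine_kernel T (l i - cnj (l j))))
     \<le> ingham_error T H q * (\<Sum>n\<in>{p..N}. (cmod (a n))\<^sup>2)"
proof -
  define B where "B i j = (if j = i then 0 else ingham_error T H q * ingham_coeff (real i - real j))" for i j
  have "cmod (\<Sum>i\<in>{p..N}. \<Sum>j\<in>{p..N}. a i * cnj (a j) * (if j = i then 0 else sine_kernel T (l i - cnj (l j))))
     \<le> ingham_error T H q / 2 * ((\<Sum>i\<in>{p..N}. (cmod (a i))\<^sup>2) + (\<Sum>i\<in>{p..N}. (cmod (cnj (a i)))\<^sup>2))"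
  proof (rule schur_test[where B = B])
    fix i j assume ij: "i \<in> {p..N}" "j \<in> {p..N}"
    show "B i j = B j i" unfolding B_def by (simp add: ingham_coeff_def power2_commute)
    show "cmod (if j = i then 0 else sine_kernel T (l i - cnj (l j))) \<le> B i j"
    proof (cases "j = i")
      case False
      then have "1 \<le> \<bar>real i - real j\<bar>" by auto
      moreover have "\<bar>Im (l i - cnj (l j))\<bar> \<le> 2 * H" using Im_le[of i] Im_le[of j] ij by simp
      ultimately show ?thesis
        using False abs_Re_diff_ge[of i j] ij norm_sine_kernel_le_ingham_coeff[of "\<bar>real i - real j\<bar>" "l i - cnj (l j)"]
        by (simp add: B_def ingham_coeff_def)
    qed (simp add: B_def)
  next
    fix i assume i: "i \<in> {p..N}"
    have "(\<Sum>j\<in>{p..N}. B i j) = ingham_error T H q * (\<Sum>j\<in>{p..N}. if j = i then 0 else ingham_coeff (real i - real j))"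
      unfolding B_def sum_distrib_left by (intro sum.cong) auto
    also have "\<dots> \<le> ingham_error T H q * 1"
      using sum_offdiag_ingham_coeff_le[OF i] ingham_error_nonneg T_pos by (intro mult_left_mono) auto
    finally show "(\<Sum>j\<in>{p..N}. B i j) \<le> ingham_error T H q" by simp
  qed simp
  then show ?thesis by simp
qed

lemma abs_Im_diag_le: "p \<le> i \<Longrightarrow> \<bar>Im (l i - cnj (l i))\<bar> \<le> 2 * H"
  using Im_le[of i] by simp

lemma sine_energy_exp_sum_le:
  "sine_energy T (exp_sum a l {p..N}) \<le> ingham_upper T H q * (\<Sum>n\<in>{p..N}. (cmod (a n))\<^sup>2)"
proof -
  define Off where "Off = (\<Sum>i\<in>{p..N}. \<Sum>j\<in>{p..N}. a i * cnj (a j) * (if j = i then 0 else sine_kernel T (l i - cnj (l j))))"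
  define A where "A = (\<Sum>n\<in>{p..N}. (cmod (a n))\<^sup>2)"
  have "(\<Sum>i\<in>{p..N}. (cmod (a i))\<^sup>2 * Re (sine_kernel T (l i - cnj (l i))))
          \<le> (\<Sum>i\<in>{p..N}. (cmod (a i))\<^sup>2 * (T * exp (2 * H * T)))"
  proof (intro sum_mono mult_left_mono)
    fix i assume "i \<in> {p..N}"
    then have "cmod (sine_kernel T (l i - cnj (l i))) \<le> T * exp (2 * H * T)"
      using norm_sine_kernel_le[OF T_pos abs_Im_diag_le] by simp
    then show "Re (sine_kernel T (l i - cnj (l i))) \<le> T * exp (2 * H * T)"
      using abs_Re_le_cmod[of "sine_kernel T (l i - cnj (l i))"] by linarith
  qed simp
  also have "\<dots> = T * exp (2 * H * T) * A" unfolding A_def by (simp add: sum_distrib_left mult.commute)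
  finally have diag: "(\<Sum>i\<in>{p..N}. (cmod (a i))\<^sup>2 * Re (sine_kernel T (l i - cnj (l i)))) \<le> T * exp (2 * H * T) * A" .
  have "Re Off \<le> ingham_error T H q * A"
    using norm_offdiag_le[of a N] abs_Re_le_cmod[of Off] unfolding Off_def A_def by linarith
  with diag show ?thesis
    unfolding sine_energy_exp_sum_diag_offdiag[OF T_pos finite_atLeastAtMost] Off_def[symmetric] A_def[symmetric]
    by (simp add: ingham_upper_def distrib_right)
qed

lemma sine_energy_exp_sum_ge:
  "(exp (- (2 * H * T)) * (2 * T / pi) - ingham_error T H q) * (\<Sum>n\<in>{p..N}. (cmod (a n))\<^sup>2)
     \<le> sine_energy T (exp_sum a l {p..N})"
proof -
  define Off where "Off = (\<Sum>i\<in>{p..N}. \<Sum>j\<in>{p..N}. a i * cnj (a j) * (if j = i then 0 else sine_kernel T (l i - cnj (l j))))"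
  define A where "A = (\<Sum>n\<in>{p..N}. (cmod (a n))\<^sup>2)"
  have "exp (- (2 * H * T)) * (2 * T / pi) * A = (\<Sum>i\<in>{p..N}. (cmod (a i))\<^sup>2 * (exp (- (2 * H * T)) * (2 * T / pi)))"
    unfolding A_def by (simp only: sum_distrib_right mult.commute)
  also have "\<dots> \<le> (\<Sum>i\<in>{p..N}. (cmod (a i))\<^sup>2 * Re (sine_kernel T (l i - cnj (l i))))"
  proof (intro sum_mono mult_left_mono)
    fix i assume "i \<in> {p..N}"
    then have "exp (- (2 * H * T)) \<le> exp (- \<bar>Im (l i - cnj (l i))\<bar> * T)"
      using abs_Im_diag_le[of i] T_pos by (simp add: mult_right_mono)
    then have "exp (- (2 * H * T)) * (2 * T / pi) \<le> exp (- \<bar>Im (l i - cnj (l i))\<bar> * T) * (2 * T / pi)"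
      using T_pos by (intro mult_right_mono) auto
    also have "\<dots> \<le> Re (sine_kernel T (l i - cnj (l i)))" by (rule Re_sine_kernel_ge[OF T_pos]) simp
    finally show "exp (- (2 * H * T)) * (2 * T / pi) \<le> Re (sine_kernel T (l i - cnj (l i)))" .
  qed simp
  finally have diag: "exp (- (2 * H * T)) * (2 * T / pi) * A \<le> (\<Sum>i\<in>{p..N}. (cmod (a i))\<^sup>2 * Re (sine_kernel T (l i - cnj (l i))))" .
  have "- (ingham_error T H q * A) \<le> Re Off"
    using norm_offdiag_le[of a N] abs_Re_le_cmod[of Off] unfolding Off_def A_def by linarith
  with diag show ?thesis
    unfolding sine_energy_exp_sum_diag_offdiag[OF T_pos finite_atLeastAtMost] Off_def[symmetric] A_def[symmetric]
    by (simp add: left_diff_distrib)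
qed

text \<open>The cross terms of \<open>|f + cnj f|\<^sup>2\<close> oscillate with the frequencies \<open>l i + l j\<close>, whose real parts
  are at least \<open>g (P + (i - p) + (j - p))\<close> by the gap and the start condition.\<close>
lemma norm_cross_le:
  assumes P: "1 \<le> P" and start: "g * real P \<le> 2 * Re (l p)"
  shows "cmod (\<Sum>i\<in>{p..N}. \<Sum>j\<in>{p..N}. a i * a j * sine_kernel T (l i + l j))
           \<le> ingham_error T H q / (2 * (2 * real P - 1)) * (\<Sum>n\<in>{p..N}. (cmod (a n))\<^sup>2)"
proof -
  define B where "B i j = ingham_error T H q * ingham_coeff (real (P + (i - p) + (j - p)))" for i j
  have "cmod (\<Sum>i\<in>{p..N}. \<Sum>j\<in>{p..N}. a i * a j * sine_kernel T (l i + l j))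
     \<le> ingham_error T H q / (2 * (2 * real P - 1)) / 2 * ((\<Sum>i\<in>{p..N}. (cmod (a i))\<^sup>2) + (\<Sum>i\<in>{p..N}. (cmod (a i))\<^sup>2))"
  proof (rule schur_test[where B = B])
    fix i j assume ij: "i \<in> {p..N}" "j \<in> {p..N}"
    show "B i j = B j i" unfolding B_def by (simp add: add_ac)
    have "g * (real i - real p) \<le> Re (l i) - Re (l p)" "g * (real j - real p) \<le> Re (l j) - Re (l p)"
      using ij by (auto intro!: gap_increment[of p g "\<lambda>n. Re (l n)", OF gap])
    then have "g * real (P + (i - p) + (j - p)) \<le> Re (l i + l j)"
      using ij start by (simp add: of_nat_diff algebra_simps)
    moreover have "\<bar>Im (l i + l j)\<bar> \<le> 2 * H" using Im_le[of i] Im_le[of j] ij by simp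
    ultimately show "cmod (sine_kernel T (l i + l j)) \<le> B i j"
      unfolding B_def using P gap_nonneg by (intro norm_sine_kernel_le_ingham_coeff) auto
  next
    fix i assume i: "i \<in> {p..N}"
    have "(\<Sum>j\<in>{p..N}. ingham_coeff (real (P + (i - p) + (j - p)))) \<le> 1 / (2 * (2 * real P - 1))"
      using i P by (intro sum_ingham_coeff_inj_le[where Q = "P + (i - p) + (N - p)"]) (auto simp: inj_on_def)
    then show "(\<Sum>j\<in>{p..N}. B i j) \<le> ingham_error T H q / (2 * (2 * real P - 1))"
      unfolding B_def sum_distrib_left[symmetric]
      using mult_left_mono[OF _ ingham_error_nonneg[of T H q]] T_pos by fastforce
  qed simp
  also have "\<dots> = ingham_error T H q / (2 * (2 * real P - 1)) * (\<Sum>n\<in>{p..N}. (cmod (a n))\<^sup>2)"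
    by (simp only: field_sum_of_halves distrib_left)
  finally show ?thesis .
qed

lemma sine_energy_exp_sum_add_cnj_ge:
  assumes \<delta>: "0 < \<delta>" "1 / q\<^sup>2 \<le> 1 - \<delta>" and H: "0 \<le> H" "16 * H * T \<le> \<delta>"
    and P: "1 \<le> P" "8 / \<delta> \<le> 2 * real P - 1" and start: "g * real P \<le> 2 * Re (l p)"
  shows "5 / 2 * (T / pi * \<delta> * (\<Sum>n\<in>{p..N}. (cmod (a n))\<^sup>2))
           \<le> sine_energy T (\<lambda>t. exp_sum a l {p..N} t + cnj (exp_sum a l {p..N} t))"
proof -
  define A where "A = (\<Sum>n\<in>{p..N}. (cmod (a n))\<^sup>2)"
  define Y where "Y = T / pi * \<delta> * A"
  define X where "X = (\<Sum>i\<in>{p..N}. \<Sum>j\<in>{p..N}. a i * a j * sine_kernel T (l i + l j))"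
  have A: "0 \<le> A" unfolding A_def by (simp add: sum_nonneg)
  have "3 / 2 * (T / pi * \<delta>) * A \<le> (exp (- (2 * H * T)) * (2 * T / pi) - ingham_error T H q) * A"
    using ingham_lower_constant_ge[OF T_pos q_ge_1 \<delta> H] A by (rule mult_right_mono)
  also have "\<dots> \<le> sine_energy T (exp_sum a l {p..N})"
    unfolding A_def by (rule sine_energy_exp_sum_ge)
  finally have diag: "3 / 2 * Y \<le> sine_energy T (exp_sum a l {p..N})" by (simp add: Y_def)
  have "cmod X \<le> ingham_error T H q / (2 * (2 * real P - 1)) * A"
    unfolding X_def A_def by (rule norm_cross_le[OF P(1) start])
  also have "\<dots> \<le> T / pi * (\<delta> / 4) * A"
    using ingham_error_le_quarter[OF T_pos q_ge_1 \<delta> H P(2)] A by (rule mult_right_mono)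
  finally have cross: "- (Y / 4) \<le> Re X"
    using abs_Re_le_cmod[of X] by (simp add: Y_def)
  have "sine_energy T (\<lambda>t. exp_sum a l {p..N} t + cnj (exp_sum a l {p..N} t)) =
          2 * sine_energy T (exp_sum a l {p..N}) + 2 * Re X"
    unfolding X_def by (rule sine_energy_exp_sum_add_cnj[OF T_pos finite_atLeastAtMost])
  with diag cross have "5 / 2 * Y \<le> sine_energy T (\<lambda>t. exp_sum a l {p..N} t + cnj (exp_sum a l {p..N} t))"
    by linarith
  then show ?thesis unfolding Y_def A_def .
qed

end

lemma sum_atLeastAtMost_split:
  assumes "p \<le> Suc N" "N \<le> M"
  shows "sum f {p..M} = sum f {p..N} + sum f {Suc N..M}"
proof -
  have "{p..M} = {p..N} \<union> {Suc N..M}" using assms by auto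
  then show ?thesis by (simp add: sum.union_disjoint ivl_disj_int)
qed

lemma sum_atLeastAtMost_le_suminf:
  fixes f :: "nat \<Rightarrow> real"
  assumes "summable f" "\<And>n. 0 \<le> f n"
  shows "sum f {m..n} \<le> (\<Sum>k. f (k + m))"
proof (cases "m \<le> n")
  case True
  have "sum f {m..n} = (\<Sum>k\<in>{0..n - m}. f (k + m))"
    using True sum.shift_bounds_cl_nat_ivl[of f 0 m "n - m"] by simp
  also have "\<dots> \<le> (\<Sum>k. f (k + m))"
    using assms by (intro sum_le_suminf summable_ignore_initial_segment) auto
  finally show ?thesis .
qed (use assms in \<open>simp add: suminf_nonneg summable_ignore_initial_segment\<close>)

lemma tail_suminf_tendsto_0:
  fixes f :: "nat \<Rightarrow> real"
  assumes "summable f"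
  shows "(\<lambda>N. \<Sum>k. f (k + Suc N)) \<longlonglongrightarrow> 0"
  using LIMSEQ_Suc[OF suminf_exist_split2[OF assms]] by simp

lemma sum_atLeastAtMost_tendsto_suminf:
  fixes s :: "nat \<Rightarrow> real"
  assumes "summable s"
  shows "(\<lambda>N. \<Sum>n\<in>{n0..N}. s n) \<longlonglongrightarrow> (\<Sum>n. s (n + n0))"
proof -
  have "(\<lambda>N. (\<Sum>i\<le>N. s i) - (\<Sum>i<n0. s i)) \<longlonglongrightarrow> suminf s - (\<Sum>i<n0. s i)"
    by (intro tendsto_diff summable_LIMSEQ' assms tendsto_const)
  moreover have "suminf s - (\<Sum>i<n0. s i) = (\<Sum>n. s (n + n0))"
    using suminf_split_initial_segment[OF assms, of n0] by simp
  moreover have "\<forall>\<^sub>F N in sequentially. (\<Sum>i\<le>N. s i) - (\<Sum>i<n0. s i) = (\<Sum>n\<in>{n0..N}. s n)"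
    unfolding eventually_sequentially
  proof (intro exI[of _ n0] allI impI)
    fix N assume "n0 \<le> N"
    then have "{..N} = {..<n0} \<union> {n0..N}" by auto
    then show "(\<Sum>i\<le>N. s i) - (\<Sum>i<n0. s i) = (\<Sum>n\<in>{n0..N}. s n)"
      by (simp add: sum.union_disjoint ivl_disj_int)
  qed
  ultimately show ?thesis using Lim_transform_eventually by metis
qed

lemma sine_energy_convergent_of_tail_bound:
  fixes u :: "nat \<Rightarrow> nat \<Rightarrow> real \<Rightarrow> complex" and s b :: "nat \<Rightarrow> real"
  assumes T: "0 < T" and cont: "\<And>p N. continuous_on {0..T} (u p N)"
    and diff: "\<And>N M t. n0 \<le> N \<Longrightarrow> N \<le> M \<Longrightarrow> u n0 M t - u n0 N t = u (Suc N) M t"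
    and bound: "\<And>p N. n0 \<le> p \<Longrightarrow> sine_energy T (u p N) \<le> K * (sum s {p..N} + (sum b {p..N})\<^sup>2)"
    and K: "0 \<le> K" and s: "summable s" "\<And>n. 0 \<le> s n" and b: "summable b" "\<And>n. 0 \<le> b n"
  shows "convergent (\<lambda>N. sine_energy T (u n0 N))"
proof (rule sine_energy_convergent[OF T cont])
  define ts where "ts N = (\<Sum>k. s (k + Suc N))" for N
  define tb where "tb N = (\<Sum>k. b (k + Suc N))" for N
  show "(\<lambda>N. K * (ts N + (tb N)\<^sup>2)) \<longlonglongrightarrow> 0"
    using tail_suminf_tendsto_0[OF s(1)] tail_suminf_tendsto_0[OF b(1)]
    unfolding ts_def tb_def by (auto intro!: tendsto_eq_intros)
  fix N M assume NM: "n0 \<le> N" "N \<le> M"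
  have "sum s {Suc N..M} \<le> ts N" "sum b {Suc N..M} \<le> tb N"
    unfolding ts_def tb_def by (rule sum_atLeastAtMost_le_suminf[OF s] sum_atLeastAtMost_le_suminf[OF b])+
  moreover have "0 \<le> sum b {Suc N..M}" using b(2) by (simp add: sum_nonneg)
  ultimately have "sum s {Suc N..M} + (sum b {Suc N..M})\<^sup>2 \<le> ts N + (tb N)\<^sup>2"
    by (intro add_mono power_mono) auto
  then have "K * (sum s {Suc N..M} + (sum b {Suc N..M})\<^sup>2) \<le> K * (ts N + (tb N)\<^sup>2)"
    using K by (rule mult_left_mono)
  then have "sine_energy T (u (Suc N) M) \<le> K * (ts N + (tb N)\<^sup>2)"
    using bound[of "Suc N" M] NM by simp
  then show "sine_energy T (\<lambda>t. u n0 M t - u n0 N t) \<le> K * (ts N + (tb N)\<^sup>2)"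
    using diff[OF NM] by simp
qed

lemma summable_abs_of_powr_bound:
  fixes R s :: "nat \<Rightarrow> real"
  assumes \<nu>: "1 / 2 < \<nu>" and \<mu>: "0 \<le> \<mu>" and s: "summable s" "\<And>n. 0 \<le> s n"
    and R: "\<And>n. N \<le> n \<Longrightarrow> \<bar>R n\<bar> \<le> \<mu> * real n powr (- \<nu>) * sqrt (s n)"
  shows "summable (\<lambda>n. \<bar>R n\<bar>)"
proof (rule summable_comparison_test'[of "\<lambda>n. \<mu> / 2 * (real n powr (- 2 * \<nu>) + s n)" N])
  show "summable (\<lambda>n. \<mu> / 2 * (real n powr (- 2 * \<nu>) + s n))"
    using \<nu> s(1) by (intro summable_mult summable_add) (simp_all add: summable_real_powr_iff)
  fix n assume n: "N \<le> n"
  have "real n powr (- \<nu>) * sqrt (s n) \<le> ((real n powr (- \<nu>))\<^sup>2 + (sqrt (s n))\<^sup>2) / 2"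
    using sum_squares_bound[of "real n powr (- \<nu>)" "sqrt (s n)"] by (simp add: power2_eq_square)
  also have "\<dots> = (real n powr (- 2 * \<nu>) + s n) / 2"
    using s(2)[of n] by (simp add: powr_powr[symmetric] powr_mult_base power2_eq_square flip: powr_add)
  finally show "norm \<bar>R n\<bar> \<le> \<mu> / 2 * (real n powr (- 2 * \<nu>) + s n)"
    using R[OF n] mult_left_mono[of _ _ \<mu>] \<mu> by (fastforce simp: mult.assoc)
qed

lemma eventually_gt_of_liminf:
  assumes "liminf (\<lambda>n. ereal (f n)) = ereal \<gamma>" "g < \<gamma>"
  shows "eventually (\<lambda>n. g < f n) sequentially"
proof -
  have "ereal g < liminf (\<lambda>n. ereal (f n))" using assms by simp
  from less_LiminfD[OF this] show ?thesis by simp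
qed

lemma filterlim_at_top_of_gap:
  fixes x :: "nat \<Rightarrow> real"
  assumes g: "0 < g" and gap: "eventually (\<lambda>n. g \<le> x (Suc n) - x n) sequentially"
  shows "filterlim x at_top sequentially"
proof -
  obtain N where N: "\<And>n. N \<le> n \<Longrightarrow> g \<le> x (Suc n) - x n"
    using gap unfolding eventually_sequentially by blast
  have "eventually (\<lambda>n. K \<le> x n) sequentially" for K
  proof -
    have "K \<le> x n" if n: "N + nat \<lceil>(K - x N) / g\<rceil> \<le> n" for n
    proof -
      have "(K - x N) / g \<le> real n - real N" using n by linarith
      then have "K - x N \<le> g * (real n - real N)" using g by (simp add: field_simps)
      also have "\<dots> \<le> x n - x N" using gap_increment[of N g x, OF N order_refl] n by simp
      finally show ?thesis by simp
    qed
    then show ?thesis unfolding eventually_sequentially by blast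
  qed
  then show ?thesis unfolding filterlim_at_top by blast
qed

lemma continuous_on_u1_partial [continuous_intros]: "continuous_on S (u1_partial \<omega> \<zeta> r C D R p N)"
  unfolding u1_partial_def by (intro continuous_intros)

lemma continuous_on_u2_partial [continuous_intros]: "continuous_on S (u2_partial \<omega> \<zeta> c d C D p N)"
  unfolding u2_partial_def by (intro continuous_intros)

lemma energy_partial_eq:
  assumes T: "0 < T"
  shows "energy_partial \<omega> \<zeta> c d r C D R T n0 N =
           sine_energy T (u1_partial \<omega> \<zeta> r C D R n0 N) + sine_energy T (u2_partial \<omega> \<zeta> c d C D n0 N)"
proof -
  let ?u1 = "u1_partial \<omega> \<zeta> r C D R n0 N" and ?u2 = "u2_partial \<omega> \<zeta> c d C D n0 N"
  let ?X = "\<lambda>t. (cmod (?u1 t))\<^sup>2 + (cmod (?u2 t))\<^sup>2"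
  have "((\<lambda>t. sin (pi * t / T) * ?X t) has_integral (sine_energy T ?u1 + sine_energy T ?u2)) {0..T}"
    unfolding sine_energy_def distrib_left
    by (intro has_integral_add integrable_integral sine_energy_integrable T continuous_intros)
  then have "((\<lambda>t. if t \<in> {0..T} then sin (pi * t / T) * ?X t else 0) has_integral
               (sine_energy T ?u1 + sine_energy T ?u2)) {0..}"
    by (subst has_integral_restrict) auto
  moreover have "(\<lambda>t. if t \<in> {0..T} then sin (pi * t / T) * ?X t else 0) = (\<lambda>t. kweight T t * ?X t)"
    by (auto simp: kweight_def fun_eq_iff)
  ultimately show ?thesis unfolding energy_partial_def by (simp add: integral_unique)
qed

lemma u1_partial_eq:
  "u1_partial \<omega> \<zeta> r C D R p M t =
     (exp_sum C \<omega> {p..M} t + cnj (exp_sum C \<omega> {p..M} t))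
     + (\<Sum>n\<in>{p..M}. of_real (R n * exp (r n * t)))
     + (exp_sum D \<zeta> {p..M} t + cnj (exp_sum D \<zeta> {p..M} t))"
  unfolding u1_partial_def exp_sum_def by (simp add: sum.distrib exp_cnj algebra_simps)

lemma u2_partial_eq:
  "u2_partial \<omega> \<zeta> c d C D p M t =
     (exp_sum (\<lambda>n. d n * D n) \<zeta> {p..M} t + cnj (exp_sum (\<lambda>n. d n * D n) \<zeta> {p..M} t))
     + (exp_sum (\<lambda>n. c n * C n) \<omega> {p..M} t + cnj (exp_sum (\<lambda>n. c n * C n) \<omega> {p..M} t))"
  unfolding u2_partial_def exp_sum_def by (simp add: sum.distrib exp_cnj algebra_simps)

lemma u1_partial_diff:
  "p \<le> N \<Longrightarrow> N \<le> M \<Longrightarrow>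
     u1_partial \<omega> \<zeta> r C D R p M t - u1_partial \<omega> \<zeta> r C D R p N t = u1_partial \<omega> \<zeta> r C D R (Suc N) M t"
  unfolding u1_partial_def by (subst sum_atLeastAtMost_split[of p N M]) auto

lemma u2_partial_diff:
  "p \<le> N \<Longrightarrow> N \<le> M \<Longrightarrow>
     u2_partial \<omega> \<zeta> c d C D p M t - u2_partial \<omega> \<zeta> c d C D p N t = u2_partial \<omega> \<zeta> c d C D (Suc N) M t"
  unfolding u2_partial_def by (subst sum_atLeastAtMost_split[of p N M]) auto

definition mode_energy :: "(nat \<Rightarrow> complex) \<Rightarrow> (nat \<Rightarrow> complex) \<Rightarrow> (nat \<Rightarrow> complex) \<Rightarrow> nat \<Rightarrow> real" where
  "mode_energy C d D n = (cmod (C n))\<^sup>2 + (cmod (d n * D n))\<^sup>2"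

lemma mode_energy_nonneg: "0 \<le> mode_energy C d D n"
  unfolding mode_energy_def by simp

section \<open>Observability under separated frequencies\<close>

text \<open>The frequency conditions from \<open>n0\<close> on.  \<open>Tm\<close> is the critical time \<open>2 pi / (\<gamma> sqrt (1 - \<epsilon>))\<close> and
  \<open>q > 1\<close> the gap ratio; the Ingham lower constant is about \<open>2 (T/pi) \<delta>\<close>.  \<open>\<eta>\<close> and \<open>Hw\<close> bound the imaginary
  parts, \<open>P\<close> makes \<open>Re (\<zeta> n0)\<close> large enough for the cross terms, and \<open>Kw\<close> makes the \<open>\<omega>\<close>-modes of
  \<open>u\<^sub>2\<close> negligible.\<close>
locale mode_setting =
  fixes \<omega> \<zeta> c d :: "nat \<Rightarrow> complex" and r :: "nat \<Rightarrow> real"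
    and n0 P :: nat and Tm q g \<delta> \<eta> Hw \<rho> c1 M Kw :: real
  assumes Tm_pos: "0 < Tm" and q_ge_1: "1 \<le> q" and gap_large: "2 * q * (pi / Tm) \<le> g"
    and \<delta>_pos: "0 < \<delta>" and q_\<delta>: "1 / q\<^sup>2 \<le> 1 - \<delta>"
    and gap_\<omega>: "\<And>n. n0 \<le> n \<Longrightarrow> g \<le> Re (\<omega> (Suc n)) - Re (\<omega> n)"
    and gap_\<zeta>: "\<And>n. n0 \<le> n \<Longrightarrow> g \<le> Re (\<zeta> (Suc n)) - Re (\<zeta> n)"
    and Im_\<omega>: "\<And>n. n0 \<le> n \<Longrightarrow> \<bar>Im (\<omega> n)\<bar> \<le> Hw"
    and Im_\<zeta>: "\<And>n. n0 \<le> n \<Longrightarrow> \<bar>Im (\<zeta> n)\<bar> \<le> \<eta>" and \<eta>_small: "32 * \<eta> * Tm \<le> \<delta>"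
    and P_ge_1: "1 \<le> P" and P_large: "8 / \<delta> \<le> 2 * real P - 1"
    and Re_\<zeta>_start: "g * real P \<le> 2 * Re (\<zeta> n0)"
    and norm_\<zeta>_ge_1: "\<And>n. n0 \<le> n \<Longrightarrow> 1 \<le> cmod (\<zeta> n)"
    and c1_pos: "0 < c1" and d_ge: "\<And>n. n0 \<le> n \<Longrightarrow> c1 * cmod (\<zeta> n) \<le> cmod (d n)"
    and c_small: "\<And>n. n0 \<le> n \<Longrightarrow> (M * cmod (c n))\<^sup>2 \<le> Kw"
    and Kw_small: "4 * ingham_upper (2 * Tm) Hw 1 * Kw \<le> Tm / pi * (\<delta> / 4)"
    and r_bounded: "\<And>n. \<bar>r n\<bar> \<le> \<rho>"
begin

lemma Hw_nonneg: "0 \<le> Hw"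
  using Im_\<omega>[of n0] by simp

lemma \<eta>_nonneg: "0 \<le> \<eta>"
  using Im_\<zeta>[of n0] by simp

lemma Kw_nonneg: "0 \<le> Kw"
  using c_small[of n0] by (meson order_trans zero_le_power2 order_refl)

lemma separated_frequencies_if_gap:
  assumes T: "Tm \<le> T" and p: "n0 \<le> p"
    and gap: "\<And>n. n0 \<le> n \<Longrightarrow> g \<le> Re (l (Suc n)) - Re (l n)" and Im: "\<And>n. n0 \<le> n \<Longrightarrow> \<bar>Im (l n)\<bar> \<le> H"
  shows "separated_frequencies T q g H l p"
proof unfold_locales
  show "0 < T" using T Tm_pos by simp
  have "2 * q * (pi / T) \<le> 2 * q * (pi / Tm)"
    using T Tm_pos q_ge_1 by (intro mult_left_mono divide_left_mono) auto
  then show "2 * q * (pi / T) \<le> g" using gap_large by linarith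
qed (use q_ge_1 gap Im p in auto)

lemmas separated_\<zeta> = separated_frequencies_if_gap[where l = \<zeta> and H = \<eta>, OF _ _ gap_\<zeta> Im_\<zeta>]
  and separated_\<omega> = separated_frequencies_if_gap[where l = \<omega> and H = Hw, OF _ _ gap_\<omega> Im_\<omega>]

lemma norm_cC_sq_le:
  assumes "n0 \<le> n" "cmod (C n) \<le> M * cmod (d n * D n)"
  shows "(cmod (c n * C n))\<^sup>2 \<le> Kw * (cmod (d n * D n))\<^sup>2"
proof -
  have "cmod (c n * C n) \<le> M * cmod (c n) * cmod (d n * D n)"
    using mult_left_mono[OF assms(2) norm_ge_zero[of "c n"]] by (simp add: norm_mult mult_ac)
  then have "(cmod (c n * C n))\<^sup>2 \<le> (M * cmod (c n))\<^sup>2 * (cmod (d n * D n))\<^sup>2"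
    by (metis norm_ge_zero power_mono power_mult_distrib)
  also have "\<dots> \<le> Kw * (cmod (d n * D n))\<^sup>2"
    using c_small[OF assms(1)] by (rule mult_right_mono) simp
  finally show ?thesis .
qed

lemma norm_D_sq_le: "n0 \<le> n \<Longrightarrow> (cmod (D n))\<^sup>2 \<le> mode_energy C d D n / c1\<^sup>2"
proof -
  assume n: "n0 \<le> n"
  have "c1 * 1 \<le> c1 * cmod (\<zeta> n)" using norm_\<zeta>_ge_1[OF n] c1_pos by (intro mult_left_mono) auto
  then have "c1 \<le> cmod (d n)" using d_ge[OF n] by linarith
  then have "c1 * cmod (D n) \<le> cmod (d n * D n)" by (simp add: norm_mult mult_right_mono)
  then have "c1\<^sup>2 * (cmod (D n))\<^sup>2 \<le> (cmod (d n * D n))\<^sup>2"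
    using c1_pos by (metis power_mono power_mult_distrib mult_nonneg_nonneg less_imp_le norm_ge_zero)
  then have "c1\<^sup>2 * (cmod (D n))\<^sup>2 \<le> mode_energy C d D n"
    unfolding mode_energy_def by (simp add: add_increasing)
  then show ?thesis using c1_pos by (simp add: field_simps)
qed

lemma sine_energy_damped_modes_le:
  assumes T1: "Tm \<le> T1" "T1 \<le> 2 * Tm" and C_le: "\<And>n. n0 \<le> n \<Longrightarrow> cmod (C n) \<le> M * cmod (d n * D n)"
  shows "4 * sine_energy T1 (exp_sum (\<lambda>n. c n * C n) \<omega> {n0..N})
           \<le> Tm / pi * (\<delta> / 4) * (\<Sum>n\<in>{n0..N}. (cmod (d n * D n))\<^sup>2)"
proof -
  interpret \<omega>: separated_frequencies T1 q g Hw \<omega> n0 using separated_\<omega>[OF T1(1)] by simp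
  define A where "A = (\<Sum>n\<in>{n0..N}. (cmod (d n * D n))\<^sup>2)"
  have "sine_energy T1 (exp_sum (\<lambda>n. c n * C n) \<omega> {n0..N})
          \<le> ingham_upper T1 Hw q * (\<Sum>n\<in>{n0..N}. (cmod (c n * C n))\<^sup>2)"
    by (rule \<omega>.sine_energy_exp_sum_le)
  also have "\<dots> \<le> ingham_upper (2 * Tm) Hw 1 * (Kw * A)"
  proof (intro mult_mono)
    show "ingham_upper T1 Hw q \<le> ingham_upper (2 * Tm) Hw 1"
      using T1 \<omega>.T_pos Hw_nonneg q_ge_1 by (intro ingham_upper_mono) auto
    show "(\<Sum>n\<in>{n0..N}. (cmod (c n * C n))\<^sup>2) \<le> Kw * A"
      unfolding A_def sum_distrib_left using norm_cC_sq_le C_le by (intro sum_mono) auto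
  qed (use Tm_pos in \<open>simp_all add: ingham_upper_nonneg sum_nonneg\<close>)
  finally have "4 * sine_energy T1 (exp_sum (\<lambda>n. c n * C n) \<omega> {n0..N}) \<le> 4 * ingham_upper (2 * Tm) Hw 1 * Kw * A"
    by simp
  also have "\<dots> \<le> Tm / pi * (\<delta> / 4) * A"
    using Kw_small by (rule mult_right_mono) (simp add: A_def sum_nonneg)
  finally show ?thesis unfolding A_def .
qed

text \<open>The \<open>\<zeta>\<close>-modes carry energy \<open>5/2 (T\<^sub>1/pi) \<delta> A\<close> with \<open>A = (\<Sum>n. |d n D n|\<^sup>2)\<close>, the damped \<open>\<omega>\<close>-modes
  cost at most \<open>(Tm/pi) \<delta> A / 4\<close>.  Requiring \<open>T\<^sub>1 \<le> 2 Tm\<close> keeps all constants independent of \<open>T\<close>.\<close>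
lemma sine_energy_u2_partial_ge:
  assumes T1: "Tm \<le> T1" "T1 \<le> 2 * Tm" and C_le: "\<And>n. n0 \<le> n \<Longrightarrow> cmod (C n) \<le> M * cmod (d n * D n)"
  shows "Tm / pi * \<delta> * (\<Sum>n\<in>{n0..N}. (cmod (d n * D n))\<^sup>2) \<le> sine_energy T1 (u2_partial \<omega> \<zeta> c d C D n0 N)"
proof -
  interpret \<zeta>: separated_frequencies T1 q g \<eta> \<zeta> n0 using separated_\<zeta>[OF T1(1)] by simp
  define A where "A = (\<Sum>n\<in>{n0..N}. (cmod (d n * D n))\<^sup>2)"
  define fz where "fz = exp_sum (\<lambda>n. d n * D n) \<zeta> {n0..N}"
  define fw where "fw = exp_sum (\<lambda>n. c n * C n) \<omega> {n0..N}"
  let ?u2 = "u2_partial \<omega> \<zeta> c d C D n0 N"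
  have "16 * \<eta> * T1 \<le> 16 * \<eta> * (2 * Tm)" using T1 \<eta>_nonneg by (intro mult_left_mono) auto
  then have "16 * \<eta> * T1 \<le> \<delta>" using \<eta>_small by (simp add: mult_ac)
  then have "5 / 2 * (T1 / pi * \<delta> * A) \<le> sine_energy T1 (\<lambda>t. fz t + cnj (fz t))"
    unfolding A_def fz_def
    by (rule \<zeta>.sine_energy_exp_sum_add_cnj_ge[OF \<delta>_pos q_\<delta> \<eta>_nonneg _ P_ge_1 P_large Re_\<zeta>_start])
  moreover have "Tm / pi * \<delta> * A \<le> T1 / pi * \<delta> * A"
    using T1 \<delta>_pos by (intro mult_right_mono divide_right_mono) (auto simp: A_def sum_nonneg)
  moreover have "sine_energy T1 (\<lambda>t. fz t + cnj (fz t)) \<le> 2 * sine_energy T1 ?u2 + 2 * sine_energy T1 (\<lambda>t. fw t + cnj (fw t))"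
  proof (rule sine_energy_le_add[OF \<zeta>.T_pos])
    fix t
    have "fz t + cnj (fz t) = ?u2 t + - (fw t + cnj (fw t))"
      unfolding fz_def fw_def u2_partial_eq by simp
    then show "(cmod (fz t + cnj (fz t)))\<^sup>2 \<le> 2 * (cmod (?u2 t))\<^sup>2 + 2 * (cmod (fw t + cnj (fw t)))\<^sup>2"
      using norm_add_sq_le[of 1 "?u2 t" "- (fw t + cnj (fw t))", unfolded norm_minus_cancel] by simp
  qed (auto simp: fz_def fw_def intro!: continuous_intros)
  moreover have "sine_energy T1 (\<lambda>t. fw t + cnj (fw t)) \<le> 4 * sine_energy T1 fw"
    unfolding fw_def by (intro sine_energy_add_cnj_le \<zeta>.T_pos continuous_intros)
  moreover have "4 * sine_energy T1 fw \<le> Tm / pi * (\<delta> / 4) * A"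
    unfolding fw_def A_def using T1 C_le by (rule sine_energy_damped_modes_le)
  ultimately show ?thesis unfolding A_def[symmetric] by (simp add: algebra_simps)
qed

lemma sine_energy_u2_partial_le:
  assumes T: "Tm \<le> T" and p: "n0 \<le> p" and C_le: "\<And>n. n0 \<le> n \<Longrightarrow> cmod (C n) \<le> M * cmod (d n * D n)"
  shows "sine_energy T (u2_partial \<omega> \<zeta> c d C D p N)
           \<le> 8 * (ingham_upper T \<eta> q + ingham_upper T Hw q * Kw) * (\<Sum>n\<in>{p..N}. mode_energy C d D n)"
proof -
  interpret \<zeta>: separated_frequencies T q g \<eta> \<zeta> p using separated_\<zeta>[OF T p] .
  interpret \<omega>: separated_frequencies T q g Hw \<omega> p using separated_\<omega>[OF T p] .
  define fz where "fz = exp_sum (\<lambda>n. d n * D n) \<zeta> {p..N}"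
  define fw where "fw = exp_sum (\<lambda>n. c n * C n) \<omega> {p..N}"
  define S where "S = (\<Sum>n\<in>{p..N}. mode_energy C d D n)"
  have S: "(\<Sum>n\<in>{p..N}. (cmod (d n * D n))\<^sup>2) \<le> S" "(\<Sum>n\<in>{p..N}. (cmod (c n * C n))\<^sup>2) \<le> Kw * S"
  proof -
    show "(\<Sum>n\<in>{p..N}. (cmod (d n * D n))\<^sup>2) \<le> S"
      unfolding S_def mode_energy_def by (intro sum_mono) auto
    have "(cmod (c n * C n))\<^sup>2 \<le> Kw * mode_energy C d D n" if "n \<in> {p..N}" for n
    proof -
      have "(cmod (c n * C n))\<^sup>2 \<le> Kw * (cmod (d n * D n))\<^sup>2"
        using that p C_le by (intro norm_cC_sq_le) auto
      also have "\<dots> \<le> Kw * mode_energy C d D n"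
        unfolding mode_energy_def using Kw_nonneg by (intro mult_left_mono) auto
      finally show ?thesis .
    qed
    then show "(\<Sum>n\<in>{p..N}. (cmod (c n * C n))\<^sup>2) \<le> Kw * S"
      unfolding S_def sum_distrib_left by (rule sum_mono)
  qed
  have "sine_energy T fz \<le> ingham_upper T \<eta> q * S"
    unfolding fz_def using S(1) \<zeta>.T_pos
    by (intro order_trans[OF \<zeta>.sine_energy_exp_sum_le] mult_left_mono ingham_upper_nonneg) auto
  moreover have "sine_energy T fw \<le> ingham_upper T Hw q * (Kw * S)"
    unfolding fw_def using S(2) \<zeta>.T_pos
    by (intro order_trans[OF \<omega>.sine_energy_exp_sum_le] mult_left_mono ingham_upper_nonneg) auto
  moreover have "sine_energy T (u2_partial \<omega> \<zeta> c d C D p N)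
          \<le> 2 * sine_energy T (\<lambda>t. fz t + cnj (fz t)) + 2 * sine_energy T (\<lambda>t. fw t + cnj (fw t))"
    unfolding u2_partial_eq fz_def fw_def by (intro sine_energy_add_le_double \<zeta>.T_pos continuous_intros)
  moreover have "sine_energy T (\<lambda>t. fz t + cnj (fz t)) \<le> 4 * sine_energy T fz"
    "sine_energy T (\<lambda>t. fw t + cnj (fw t)) \<le> 4 * sine_energy T fw"
    unfolding fz_def fw_def by (intro sine_energy_add_cnj_le \<zeta>.T_pos continuous_intros)+
  ultimately show ?thesis unfolding S_def[symmetric] by (simp add: algebra_simps)
qed

lemma sine_energy_u1_partial_le:
  assumes T: "Tm \<le> T" and p: "n0 \<le> p"
  shows "sine_energy T (u1_partial \<omega> \<zeta> r C D R p N)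
           \<le> (16 * ingham_upper T Hw q + 8 * ingham_upper T \<eta> q / c1\<^sup>2) * (\<Sum>n\<in>{p..N}. mode_energy C d D n)
             + 4 * ((exp (\<rho> * T))\<^sup>2 * (2 * T / pi)) * (\<Sum>n\<in>{p..N}. \<bar>R n\<bar>)\<^sup>2"
proof -
  interpret \<zeta>: separated_frequencies T q g \<eta> \<zeta> p using separated_\<zeta>[OF T p] .
  interpret \<omega>: separated_frequencies T q g Hw \<omega> p using separated_\<omega>[OF T p] .
  define X where "X = exp_sum C \<omega> {p..N}"
  define Y where "Y = exp_sum D \<zeta> {p..N}"
  define Rs where "Rs t = (\<Sum>n\<in>{p..N}. complex_of_real (R n * exp (r n * t)))" for t
  define S where "S = (\<Sum>n\<in>{p..N}. mode_energy C d D n)"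
  have T_pos: "0 < T" by (rule \<zeta>.T_pos)
  have "sine_energy T X \<le> ingham_upper T Hw q * S"
    unfolding X_def S_def mode_energy_def using T_pos
    by (intro order_trans[OF \<omega>.sine_energy_exp_sum_le] mult_left_mono ingham_upper_nonneg sum_mono) auto
  moreover have "sine_energy T Y \<le> ingham_upper T \<eta> q * (S / c1\<^sup>2)"
    unfolding Y_def S_def sum_divide_distrib using T_pos p
    by (intro order_trans[OF \<zeta>.sine_energy_exp_sum_le] mult_left_mono ingham_upper_nonneg sum_mono norm_D_sq_le) auto
  moreover have "sine_energy T Rs \<le> (exp (\<rho> * T))\<^sup>2 * (2 * T / pi) * (\<Sum>n\<in>{p..N}. \<bar>R n\<bar>)\<^sup>2"
    unfolding Rs_def using T_pos r_bounded by (rule sine_energy_real_exp_sum_le)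
  moreover have "sine_energy T (u1_partial \<omega> \<zeta> r C D R p N)
          \<le> 2 * sine_energy T (\<lambda>t. (X t + cnj (X t)) + Rs t) + 2 * sine_energy T (\<lambda>t. Y t + cnj (Y t))"
    unfolding u1_partial_eq X_def Y_def Rs_def by (intro sine_energy_add_le_double T_pos continuous_intros)
  moreover have "sine_energy T (\<lambda>t. (X t + cnj (X t)) + Rs t)
          \<le> 2 * sine_energy T (\<lambda>t. X t + cnj (X t)) + 2 * sine_energy T Rs"
    unfolding X_def Rs_def by (intro sine_energy_add_le_double T_pos continuous_intros)
  moreover have "sine_energy T (\<lambda>t. X t + cnj (X t)) \<le> 4 * sine_energy T X"
    "sine_energy T (\<lambda>t. Y t + cnj (Y t)) \<le> 4 * sine_energy T Y"
    unfolding X_def Y_def by (intro sine_energy_add_cnj_le T_pos continuous_intros)+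
  ultimately have "sine_energy T (u1_partial \<omega> \<zeta> r C D R p N)
      \<le> 16 * (ingham_upper T Hw q * S) + 8 * (ingham_upper T \<eta> q * (S / c1\<^sup>2))
         + 4 * ((exp (\<rho> * T))\<^sup>2 * (2 * T / pi) * (\<Sum>n\<in>{p..N}. \<bar>R n\<bar>)\<^sup>2)"
    by linarith
  then show ?thesis unfolding S_def[symmetric] by (simp add: algebra_simps)
qed

lemma energy_partial_convergent:
  assumes T: "Tm \<le> T" and C_le: "\<And>n. n0 \<le> n \<Longrightarrow> cmod (C n) \<le> M * cmod (d n * D n)"
    and summable_E: "summable (mode_energy C d D)" and summable_R: "summable (\<lambda>n. \<bar>R n\<bar>)"
  shows "convergent (\<lambda>N. energy_partial \<omega> \<zeta> c d r C D R T n0 N)"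
proof -
  have T_pos: "0 < T" using T Tm_pos by simp
  define K1 where "K1 = 16 * ingham_upper T Hw q + 8 * ingham_upper T \<eta> q / c1\<^sup>2"
  define K2 where "K2 = 8 * (ingham_upper T \<eta> q + ingham_upper T Hw q * Kw)"
  define K3 where "K3 = 4 * ((exp (\<rho> * T))\<^sup>2 * (2 * T / pi))"
  have K: "0 \<le> K1" "0 \<le> K2" "0 \<le> K3"
    unfolding K1_def K2_def K3_def using T_pos Kw_nonneg
    by (auto intro!: add_nonneg_nonneg mult_nonneg_nonneg divide_nonneg_nonneg ingham_upper_nonneg)
  note tail_bound = sine_energy_convergent_of_tail_bound[OF T_pos _ _ _ _ summable_E mode_energy_nonneg summable_R]
  have "convergent (\<lambda>N. sine_energy T (u1_partial \<omega> \<zeta> r C D R n0 N))"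
  proof (rule tail_bound)
    fix p N assume "n0 \<le> p"
    then have "sine_energy T (u1_partial \<omega> \<zeta> r C D R p N)
        \<le> K1 * sum (mode_energy C d D) {p..N} + K3 * (\<Sum>n\<in>{p..N}. \<bar>R n\<bar>)\<^sup>2"
      unfolding K1_def K3_def using T by (intro sine_energy_u1_partial_le)
    also have "\<dots> \<le> (K1 + K3) * (sum (mode_energy C d D) {p..N} + (\<Sum>n\<in>{p..N}. \<bar>R n\<bar>)\<^sup>2)"
      using K by (simp add: algebra_simps sum_nonneg mode_energy_nonneg)
    finally show "sine_energy T (u1_partial \<omega> \<zeta> r C D R p N)
        \<le> (K1 + K3) * (sum (mode_energy C d D) {p..N} + (\<Sum>n\<in>{p..N}. \<bar>R n\<bar>)\<^sup>2)" .
  qed (use K in \<open>auto simp: u1_partial_diff intro: continuous_intros\<close>)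
  moreover have "convergent (\<lambda>N. sine_energy T (u2_partial \<omega> \<zeta> c d C D n0 N))"
  proof (rule tail_bound)
    fix p N assume "n0 \<le> p"
    then have "sine_energy T (u2_partial \<omega> \<zeta> c d C D p N) \<le> K2 * sum (mode_energy C d D) {p..N}"
      unfolding K2_def using T C_le by (intro sine_energy_u2_partial_le)
    also have "\<dots> \<le> K2 * (sum (mode_energy C d D) {p..N} + (\<Sum>n\<in>{p..N}. \<bar>R n\<bar>)\<^sup>2)"
      using K by (intro mult_left_mono) auto
    finally show "sine_energy T (u2_partial \<omega> \<zeta> c d C D p N)
        \<le> K2 * (sum (mode_energy C d D) {p..N} + (\<Sum>n\<in>{p..N}. \<bar>R n\<bar>)\<^sup>2)" .
  qed (use K in \<open>auto simp: u2_partial_diff intro: continuous_intros\<close>)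
  ultimately show ?thesis
    unfolding energy_partial_eq[OF T_pos] by (rule convergent_add)
qed

definition observability_constant :: "real \<Rightarrow> real" where
  "observability_constant T = min T (2 * Tm) / T * (Tm / pi * \<delta> / (1 + M\<^sup>2))"

lemma energy_partial_ge:
  assumes T: "Tm \<le> T" and C_le: "\<And>n. n0 \<le> n \<Longrightarrow> cmod (C n) \<le> M * cmod (d n * D n)"
  shows "observability_constant T * (\<Sum>n\<in>{n0..N}. mode_energy C d D n)
           \<le> energy_partial \<omega> \<zeta> c d r C D R T n0 N"
proof -
  define T1 where "T1 = min T (2 * Tm)"
  define A where "A = (\<Sum>n\<in>{n0..N}. (cmod (d n * D n))\<^sup>2)"
  have T1: "Tm \<le> T1" "T1 \<le> 2 * Tm" "0 < T1" "T1 \<le> T" unfolding T1_def using T Tm_pos by auto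
  have "mode_energy C d D n \<le> (1 + M\<^sup>2) * (cmod (d n * D n))\<^sup>2" if "n \<in> {n0..N}" for n
  proof -
    have "(cmod (C n))\<^sup>2 \<le> (M * cmod (d n * D n))\<^sup>2"
      using C_le that by (intro power_mono) auto
    then show ?thesis unfolding mode_energy_def by (simp add: power_mult_distrib algebra_simps)
  qed
  then have "(\<Sum>n\<in>{n0..N}. mode_energy C d D n) \<le> (1 + M\<^sup>2) * A"
    unfolding A_def sum_distrib_left by (rule sum_mono)
  then have "T1 / T * (Tm / pi * \<delta> / (1 + M\<^sup>2)) * (\<Sum>n\<in>{n0..N}. mode_energy C d D n)
               \<le> T1 / T * (Tm / pi * \<delta> / (1 + M\<^sup>2)) * ((1 + M\<^sup>2) * A)"
    using T1 Tm_pos \<delta>_pos by (intro mult_left_mono) (auto simp: add_pos_nonneg)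
  also have "\<dots> = T1 / T * (Tm / pi * \<delta> * A)"
    using add_pos_nonneg[of 1 "M\<^sup>2"] by simp
  also have "\<dots> \<le> T1 / T * sine_energy T1 (u2_partial \<omega> \<zeta> c d C D n0 N)"
    unfolding A_def using T1 by (intro mult_left_mono sine_energy_u2_partial_ge C_le) auto
  also have "\<dots> \<le> sine_energy T (u2_partial \<omega> \<zeta> c d C D n0 N)"
    using T1 by (intro sine_energy_mono_length continuous_intros) auto
  also have "\<dots> \<le> energy_partial \<omega> \<zeta> c d r C D R T n0 N"
    using energy_partial_eq T1 sine_energy_nonneg[of T "u1_partial \<omega> \<zeta> r C D R n0 N"]
    by (simp add: continuous_intros)
  finally show ?thesis unfolding T1_def observability_constant_def .
qed

text \<open>Only the modes \<open>n \<ge> n0\<close> enter.\<close>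
lemma observability_inequality:
  fixes \<mu> \<nu> :: real and n' :: nat
  assumes n0: "1 \<le> n0" and \<mu>: "0 < \<mu>" and \<nu>: "1 / 2 < \<nu>" and T: "Tm < T"
  shows "\<exists>cT::real. cT > 0 \<and>
    (\<forall>(C::nat \<Rightarrow> complex) (D::nat \<Rightarrow> complex) (R::nat \<Rightarrow> real).
       (\<forall>n. 1 \<le> n \<and> n' \<le> n \<longrightarrow>
          \<bar>R n\<bar> \<le> \<mu> * real n powr (-\<nu>) * sqrt ((cmod (C n))\<^sup>2 + (cmod (d n * D n))\<^sup>2)) \<longrightarrow>
       (\<forall>n. 1 \<le> n \<and> n \<le> n' \<longrightarrow>
          \<bar>R n\<bar> \<le> \<mu> * sqrt ((cmod (C n))\<^sup>2 + (cmod (d n * D n))\<^sup>2)) \<longrightarrow>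
       summable (\<lambda>n. (cmod (C n))\<^sup>2 + (cmod (d n * D n))\<^sup>2) \<longrightarrow>
       (\<forall>n. 1 \<le> n \<longrightarrow> cmod (C n) \<le> M * cmod (d n * D n)) \<longrightarrow>
       (\<exists>L. (\<lambda>N. energy_partial \<omega> \<zeta> c d r C D R T n0 N) \<longlonglongrightarrow> L \<and>
            cT * (\<Sum>n. (cmod (C (n + n0)))\<^sup>2 + (cmod (d (n + n0) * D (n + n0)))\<^sup>2) \<le> L))"
proof (rule exI[of _ "observability_constant T"], intro conjI allI impI)
  show "0 < observability_constant T"
    unfolding observability_constant_def using T Tm_pos \<delta>_pos by (simp add: add_pos_nonneg)
  fix C D :: "nat \<Rightarrow> complex" and R :: "nat \<Rightarrow> real"
  assume R: "\<forall>n. 1 \<le> n \<and> n' \<le> n \<longrightarrow> \<bar>R n\<bar> \<le> \<mu> * real n powr (-\<nu>) * sqrt ((cmod (C n))\<^sup>2 + (cmod (d n * D n))\<^sup>2)"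
    and "\<forall>n. 1 \<le> n \<and> n \<le> n' \<longrightarrow> \<bar>R n\<bar> \<le> \<mu> * sqrt ((cmod (C n))\<^sup>2 + (cmod (d n * D n))\<^sup>2)"
    and summable_E: "summable (\<lambda>n. (cmod (C n))\<^sup>2 + (cmod (d n * D n))\<^sup>2)"
    and C: "\<forall>n. 1 \<le> n \<longrightarrow> cmod (C n) \<le> M * cmod (d n * D n)"
  have C_le: "n0 \<le> n \<Longrightarrow> cmod (C n) \<le> M * cmod (d n * D n)" for n using C n0 by simp
  have "summable (\<lambda>n. \<bar>R n\<bar>)"
    using R by (intro summable_abs_of_powr_bound[OF \<nu> less_imp_le[OF \<mu>] summable_E, where N = "max 1 n'"]) auto
  then obtain L where L: "(\<lambda>N. energy_partial \<omega> \<zeta> c d r C D R T n0 N) \<longlonglongrightarrow> L"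
    using energy_partial_convergent[of T C D R] T C_le summable_E
    unfolding convergent_def mode_energy_def[abs_def] by fastforce
  moreover have "observability_constant T * (\<Sum>n. mode_energy C d D (n + n0)) \<le> L"
  proof (rule LIMSEQ_le[OF _ L])
    show "(\<lambda>N. observability_constant T * (\<Sum>n\<in>{n0..N}. mode_energy C d D n))
            \<longlonglongrightarrow> observability_constant T * (\<Sum>n. mode_energy C d D (n + n0))"
      using summable_E unfolding mode_energy_def[abs_def]
      by (intro tendsto_mult_left sum_atLeastAtMost_tendsto_suminf)
    show "\<exists>N0. \<forall>N\<ge>N0. observability_constant T * (\<Sum>n\<in>{n0..N}. mode_energy C d D n)
            \<le> energy_partial \<omega> \<zeta> c d r C D R T n0 N"
      using energy_partial_ge[of T C D] T C_le by auto
  qed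
  ultimately show "\<exists>L. (\<lambda>N. energy_partial \<omega> \<zeta> c d r C D R T n0 N) \<longlonglongrightarrow> L \<and>
      observability_constant T *
        (\<Sum>n. (cmod (C (n + n0)))\<^sup>2 + (cmod (d (n + n0) * D (n + n0)))\<^sup>2) \<le> L"
    unfolding mode_energy_def by blast
qed

end

text \<open>This is where \<open>T > 2 pi / (\<gamma> sqrt (1 - \<epsilon>))\<close> enters: the gap ratio \<open>q\<close> exceeds 1
  while the gap \<open>g\<close> stays below the asymptotic gap \<open>\<gamma>\<close>.\<close>
lemma exists_gap_ratio:
  assumes \<gamma>: "0 < \<gamma>" and \<epsilon>: "0 < \<epsilon>" "\<epsilon> < 1"
  obtains q g where "1 < q" "0 < g" "g < \<gamma>" "2 * q * (pi / (2 * pi / (\<gamma> * sqrt (1 - \<epsilon>)))) = g"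
proof
  define s where "s = sqrt (1 - \<epsilon>)"
  have s: "0 < s" "s < 1" unfolding s_def using \<epsilon> by auto
  show "1 < (1 + s) / (2 * s)" using s by (simp add: field_simps)
  show "0 < \<gamma> * (1 + s) / 2" "\<gamma> * (1 + s) / 2 < \<gamma>" using \<gamma> s by auto
  show "2 * ((1 + s) / (2 * s)) * (pi / (2 * pi / (\<gamma> * sqrt (1 - \<epsilon>)))) = \<gamma> * (1 + s) / 2"
    using \<gamma> s unfolding s_def[symmetric] by (simp add: field_simps)
qed

lemma mult_norm_sq_le_if_norm_large:
  fixes c w :: complex
  assumes M: "0 < M" and K: "0 < K" and c: "cmod c \<le> M / cmod w" and w: "M\<^sup>2 / sqrt K < cmod w"
  shows "(M * cmod c)\<^sup>2 \<le> K"
proof -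
  have "0 \<le> M\<^sup>2 / sqrt K" using K by simp
  then have w_pos: "0 < cmod w" using w by linarith
  have "M * cmod c \<le> M * (M / cmod w)" using c M by (intro mult_left_mono) auto
  also have "\<dots> \<le> sqrt K" using w w_pos K by (simp add: power2_eq_square pos_divide_less_eq divide_le_eq mult.commute)
  finally have "M * cmod c \<le> sqrt K" .
  then show ?thesis
    using M K by (metis abs_of_nonneg mult_nonneg_nonneg norm_ge_zero less_imp_le real_sqrt_le_iff real_sqrt_abs)
qed

lemma eventually_frequency_conditions:
  fixes \<omega> \<zeta> :: "nat \<Rightarrow> complex"
  assumes g: "0 < g" "g < \<gamma>" and \<eta>: "0 < \<eta>"
    and gap_\<omega>: "liminf (\<lambda>n. ereal (Re (\<omega> (Suc n)) - Re (\<omega> n))) = ereal \<gamma>"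
    and gap_\<zeta>: "liminf (\<lambda>n. ereal (Re (\<zeta> (Suc n)) - Re (\<zeta> n))) = ereal \<gamma>"
    and Im_\<omega>: "(\<lambda>n. Im (\<omega> n)) \<longlonglongrightarrow> \<alpha>" and Im_\<zeta>: "(\<lambda>n. Im (\<zeta> n)) \<longlonglongrightarrow> 0"
  shows "\<forall>\<^sub>F n in sequentially. (g \<le> Re (\<omega> (Suc n)) - Re (\<omega> n) \<and> g \<le> Re (\<zeta> (Suc n)) - Re (\<zeta> n))
      \<and> Z \<le> Re (\<zeta> n) \<and> W < Re (\<omega> n) \<and> \<bar>Im (\<zeta> n)\<bar> \<le> \<eta> \<and> \<bar>Im (\<omega> n)\<bar> \<le> \<bar>\<alpha>\<bar> + 1"
proof -
  have Re_to_top: "filterlim (\<lambda>n. Re (l n)) at_top sequentially"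
    if "liminf (\<lambda>n. ereal (Re (l (Suc n)) - Re (l n))) = ereal \<gamma>" for l :: "nat \<Rightarrow> complex"
    using eventually_gt_of_liminf[OF that g(2)] by (intro filterlim_at_top_of_gap[OF g(1)]) (auto elim: eventually_mono)
  have "\<forall>\<^sub>F n in sequentially. (g < Re (\<omega> (Suc n)) - Re (\<omega> n) \<and> g < Re (\<zeta> (Suc n)) - Re (\<zeta> n))
      \<and> Z \<le> Re (\<zeta> n) \<and> W < Re (\<omega> n) \<and> dist (Im (\<zeta> n)) 0 < \<eta> \<and> dist (Im (\<omega> n)) \<alpha> < 1"
    using eventually_gt_of_liminf[OF gap_\<omega> g(2)] eventually_gt_of_liminf[OF gap_\<zeta> g(2)]
      Re_to_top[OF gap_\<zeta>, unfolded filterlim_at_top, rule_format, of Z]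
      Re_to_top[OF gap_\<omega>, unfolded filterlim_at_top_dense, rule_format, of W]
      tendstoD[OF Im_\<zeta> \<eta>] tendstoD[OF Im_\<omega> zero_less_one]
    by (intro eventually_conj)
  then show ?thesis
    by (rule eventually_mono) (auto simp: dist_real_def)
qed

lemma exists_mode_setting:
  fixes \<omega> \<zeta> c d :: "nat \<Rightarrow> complex" and r :: "nat \<Rightarrow> real" and \<gamma> \<epsilon> M c1 \<alpha> \<kappa> :: real
  assumes \<gamma>: "0 < \<gamma>" and \<epsilon>: "0 < \<epsilon>" "\<epsilon> < 1" and M: "0 < M" and c1: "0 < c1"
    and gap_\<omega>: "liminf (\<lambda>n. ereal (Re (\<omega> (Suc n)) - Re (\<omega> n))) = ereal \<gamma>"
    and gap_\<zeta>: "liminf (\<lambda>n. ereal (Re (\<zeta> (Suc n)) - Re (\<zeta> n))) = ereal \<gamma>"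
    and Im_\<omega>: "(\<lambda>n. Im (\<omega> n)) \<longlonglongrightarrow> \<alpha>" and r: "r \<longlonglongrightarrow> \<kappa>" and Im_\<zeta>: "(\<lambda>n. Im (\<zeta> n)) \<longlonglongrightarrow> 0"
    and d: "\<And>n. 1 \<le> n \<Longrightarrow> c1 * cmod (\<zeta> n) \<le> cmod (d n)"
    and c: "\<And>n. 1 \<le> n \<Longrightarrow> cmod (c n) \<le> M / cmod (\<omega> n)"
  shows "\<exists>n0 P q g \<delta> \<eta> Hw \<rho> Kw. 1 \<le> n0 \<and>
           mode_setting \<omega> \<zeta> c d r n0 P (2 * pi / (\<gamma> * sqrt (1 - \<epsilon>))) q g \<delta> \<eta> Hw \<rho> c1 M Kw"
proof -
  define Tm where "Tm = 2 * pi / (\<gamma> * sqrt (1 - \<epsilon>))"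
  obtain q g where q: "1 < q" and g: "0 < g" "g < \<gamma>" and gap_large: "2 * q * (pi / Tm) = g"
    using exists_gap_ratio[OF \<gamma> \<epsilon>] unfolding Tm_def by blast
  define \<delta> where "\<delta> = 1 - 1 / q\<^sup>2"
  define \<eta> where "\<eta> = \<delta> / (32 * Tm)"
  define Hw where "Hw = \<bar>\<alpha>\<bar> + 1"
  define Kw where "Kw = Tm / pi * (\<delta> / 4) / (4 * ingham_upper (2 * Tm) Hw 1)"
  define P where "P = nat \<lceil>8 / \<delta>\<rceil> + 1"
  have Tm: "0 < Tm" unfolding Tm_def using \<gamma> \<epsilon> by simp
  have "1 / q\<^sup>2 < 1" using q by (simp add: one_less_power)
  then have \<delta>: "0 < \<delta>" unfolding \<delta>_def by simp
  have \<eta>: "0 < \<eta>" "32 * \<eta> * Tm = \<delta>" unfolding \<eta>_def using \<delta> Tm by auto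
  have "0 < ingham_upper (2 * Tm) Hw 1"
    unfolding ingham_upper_def using Tm by (simp add: add_pos_nonneg ingham_error_nonneg)
  then have Kw: "0 < Kw" "4 * ingham_upper (2 * Tm) Hw 1 * Kw = Tm / pi * (\<delta> / 4)"
    unfolding Kw_def using Tm \<delta> by auto
  have "0 < 8 / \<delta>" using \<delta> by simp
  then have "real P = of_int \<lceil>8 / \<delta>\<rceil> + 1" unfolding P_def by simp
  then have P: "1 \<le> P" "8 / \<delta> \<le> 2 * real P - 1"
    using le_of_int_ceiling[of "8 / \<delta>"] \<open>0 < 8 / \<delta>\<close> by linarith+
  have "Bseq r" using r by (intro convergent_imp_Bseq) (auto simp: convergent_def)
  then obtain \<rho> where \<rho>: "\<And>n. \<bar>r n\<bar> \<le> \<rho>" by (metis BseqE real_norm_def)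
  obtain N0 where N0: "\<And>n. N0 \<le> n \<Longrightarrow> (g \<le> Re (\<omega> (Suc n)) - Re (\<omega> n) \<and> g \<le> Re (\<zeta> (Suc n)) - Re (\<zeta> n))
      \<and> max 1 (g * real P / 2) \<le> Re (\<zeta> n) \<and> M\<^sup>2 / sqrt Kw < Re (\<omega> n)
      \<and> \<bar>Im (\<zeta> n)\<bar> \<le> \<eta> \<and> \<bar>Im (\<omega> n)\<bar> \<le> \<bar>\<alpha>\<bar> + 1"
    using eventually_frequency_conditions[OF g \<eta>(1) gap_\<omega> gap_\<zeta> Im_\<omega> Im_\<zeta>]
    unfolding eventually_sequentially by blast
  define n0 where "n0 = max N0 1"
  have "mode_setting \<omega> \<zeta> c d r n0 P Tm q g \<delta> \<eta> Hw \<rho> c1 M Kw"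
  proof unfold_locales
    show "1 / q\<^sup>2 \<le> 1 - \<delta>" unfolding \<delta>_def by simp
    show "g * real P \<le> 2 * Re (\<zeta> n0)" using N0[of n0] unfolding n0_def by simp
    fix n assume "n0 \<le> n"
    then have n: "N0 \<le> n" "1 \<le> n" unfolding n0_def by auto
    show "g \<le> Re (\<omega> (Suc n)) - Re (\<omega> n)" "g \<le> Re (\<zeta> (Suc n)) - Re (\<zeta> n)"
      "\<bar>Im (\<omega> n)\<bar> \<le> Hw" "\<bar>Im (\<zeta> n)\<bar> \<le> \<eta>"
      using N0[OF n(1)] unfolding Hw_def by auto
    show "1 \<le> cmod (\<zeta> n)"
      using N0[OF n(1)] complex_Re_le_cmod[of "\<zeta> n"] by linarith
    show "c1 * cmod (\<zeta> n) \<le> cmod (d n)" by (rule d[OF n(2)])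
    show "(M * cmod (c n))\<^sup>2 \<le> Kw"
      using N0[OF n(1)] complex_Re_le_cmod[of "\<omega> n"]
      by (intro mult_norm_sq_le_if_norm_large[OF M Kw(1) c[OF n(2)]]) linarith
  qed (use Tm q gap_large \<delta> \<eta> P c1 \<rho> Kw(2) in auto)
  moreover have "1 \<le> n0" unfolding n0_def by simp
  ultimately show ?thesis unfolding Tm_def by blast
qed

theorem theorem5p10:
  fixes \<omega> \<zeta> c d :: "nat \<Rightarrow> complex" and r :: "nat \<Rightarrow> real"
    and \<gamma> \<alpha> \<kappa> \<mu> \<nu> M c1 c2 :: real and n' :: nat
  assumes const: "\<gamma> > 0" "\<alpha> > 0" "\<kappa> < 0" "\<mu> > 0" "\<nu> > 1/2" "M > 0" "0 < c1" "c1 \<le> c2"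
    and H1: "liminf (\<lambda>n. ereal (Re (\<omega> (Suc n)) - Re (\<omega> n))) = ereal \<gamma>"
            "liminf (\<lambda>n. ereal (Re (\<zeta> (Suc n)) - Re (\<zeta> n))) = ereal \<gamma>"
    and H2: "(\<lambda>n. Im (\<omega> n)) \<longlonglongrightarrow> \<alpha>" "r \<longlonglongrightarrow> \<kappa>" "(\<lambda>n. Im (\<zeta> n)) \<longlonglongrightarrow> 0"
    and H3: "\<And>n. n \<ge> 1 \<Longrightarrow> \<omega> n \<noteq> 0"
            "\<And>n. n \<ge> 1 \<Longrightarrow> \<zeta> n \<noteq> 0"
            "\<And>n. n \<ge> 1 \<Longrightarrow> c1 * cmod (\<zeta> n) \<le> cmod (d n) \<and> cmod (d n) \<le> c2 * cmod (\<zeta> n)"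
            "\<And>n. n \<ge> 1 \<Longrightarrow> cmod (c n) \<le> M / cmod (\<omega> n)"
  shows "\<forall>\<epsilon>::real. 0 < \<epsilon> \<and> \<epsilon> < 1 \<longrightarrow>
          (\<exists>n0::nat. n0 \<ge> 1 \<and>
            (\<forall>T::real. T > 2 * pi / (\<gamma> * sqrt (1 - \<epsilon>)) \<longrightarrow>
              (\<exists>cT::real. cT > 0 \<and>
                (\<forall>(C::nat \<Rightarrow> complex) (D::nat \<Rightarrow> complex) (R::nat \<Rightarrow> real).
                   (\<forall>n. 1 \<le> n \<and> n' \<le> n \<longrightarrow>
                      \<bar>R n\<bar> \<le> \<mu> * real n powr (-\<nu>) * sqrt ((cmod (C n))\<^sup>2 + (cmod (d n * D n))\<^sup>2)) \<longrightarrow>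
                   (\<forall>n. 1 \<le> n \<and> n \<le> n' \<longrightarrow>
                      \<bar>R n\<bar> \<le> \<mu> * sqrt ((cmod (C n))\<^sup>2 + (cmod (d n * D n))\<^sup>2)) \<longrightarrow>
                   summable (\<lambda>n. (cmod (C n))\<^sup>2 + (cmod (d n * D n))\<^sup>2) \<longrightarrow>
                   (\<forall>n. 1 \<le> n \<longrightarrow> cmod (C n) \<le> M * cmod (d n * D n)) \<longrightarrow>
                   (\<exists>L. (\<lambda>N. energy_partial \<omega> \<zeta> c d r C D R T n0 N) \<longlonglongrightarrow> L \<and>
                        cT * (\<Sum>n. (cmod (C (n + n0)))\<^sup>2 + (cmod (d (n + n0) * D (n + n0)))\<^sup>2) \<le> L)))))"
  apply (intro allI impI)
  subgoal premises \<epsilon> for \<epsilon>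
  proof -
    \<comment> \<open>Beyond \<open>n0\<close> the frequencies are large.\<close>
    obtain n0 P q g \<delta> \<eta> Hw \<rho> Kw where n0: "1 \<le> n0"
      and setting: "mode_setting \<omega> \<zeta> c d r n0 P (2 * pi / (\<gamma> * sqrt (1 - \<epsilon>))) q g \<delta> \<eta> Hw \<rho> c1 M Kw"
      using exists_mode_setting[of \<gamma> \<epsilon> M c1 \<omega> \<zeta> \<alpha> r \<kappa> d c] \<epsilon> const H1 H2 H3(3,4) by auto
    show ?thesis
      by (intro exI[of _ n0] conjI allI impI n0 mode_setting.observability_inequality[OF setting n0 const(4,5)])
  qed
  done

end
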